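(* Let $\beta>0$, $x\in(\lambda_t^-,\lambda^+)$ and $M>0$. (1) For every $\alpha\in\mathbb R$, the function $\lambda\mapsto\log\mathrm E_Y[e^{\alpha(\lambda-x)Y};\,|Y|\le M]$ is Lipschitz on every compact subset of $\mathbb R$. (2) $\psi_{x,M}(\alpha)$ is monotonically increasing in $M$, and $\lim_{M\to\infty}\psi_{x,M}(\alpha)=-\int\log(1+\alpha(x-\lambda))\,d\mu_\lambda$ if $\alpha\in[-\frac{1}{x-\lambda_t^-},\frac{1}{\lambda^+-x}]$ and $=+\infty$ otherwise. (3) $\psi_{x,M}$ and $\psi_{x,Y_M}$ are strictly convex on $\mathbb R$, and $\psi_x$ is strictly convex on $(-\frac{1}{x-\lambda_t^-},\frac{1}{\lambda^+-x})$. (4) For every $t<\bar\lambda-x$, if $M$ is large enough there exists $\alpha\in(-\infty,0)$ with $\psi'_{x,M}(\alpha)=\psi'_{x,Y_M}(\alpha)=t$; for every $t>\bar\lambda-x$, if $M$ is large enough there exists $\alpha\in(0,\infty)$ with $\psi'_{x,M}(\alpha)=\psi'_{x,Y_M}(\alpha)=t$.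
   Context: $Y$ has density $e^{-y}$ on $[0,\infty)$; $\mathrm E_Y[f(Y);\,A]=\mathrm E[f(Y)\mathbf 1_A]$. $Y_M$ has density $e^{-y}/\Pr(Y\le M)$ on $[0,M]$. Let $\lambda^\pm=(1\pm\sqrt\beta)^2$, $\mu_\lambda$ the probability measure $d\mu_\lambda=\Big((1-\tfrac1\beta)^+\delta(\lambda)+\frac{\sqrt{(\lambda-\lambda^-)^+(\lambda^+-\lambda)^+}}{2\pi\beta\lambda}\Big)d\lambda$, $\lambda_t^-=0$ if $\beta\ge1$ and $=\lambda^-$ if $\beta<1$, $\bar\lambda=\int\lambda\,d\mu_\lambda$. Define $\psi_{x,M}(\alpha)=\int\log\mathrm E_Y[e^{\alpha(\lambda-x)Y};\,|Y|\le M]\,d\mu_\lambda$, $\psi_{x,Y_M}(\alpha)=\int\log\mathrm E[e^{\alpha(\lambda-x)Y_M}]\,d\mu_\lambda$, and $\psi_x(\alpha)=\lim_{M\to\infty}\psi_{x,M}(\alpha)$. *)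

theory Defs
  imports "HOL-Probability.Probability"
begin

abbreviation Ydist :: "real measure" where
  "Ydist \<equiv> density lborel (exponential_density 1)"

definition EY :: "(real \<Rightarrow> real) \<Rightarrow> real set \<Rightarrow> real" where
  "EY f A = (\<integral>y. f y * indicator A y \<partial>Ydist)"

definition YMdist :: "real \<Rightarrow> real measure" where
  "YMdist M = density lborel
     (\<lambda>y. indicator {0..M} y * exp (- y) / measure Ydist {..M})"

definition lam_plus :: "real \<Rightarrow> real" where
  "lam_plus \<beta> = (1 + sqrt \<beta>)\<^sup>2"

definition lam_minus :: "real \<Rightarrow> real" where
  "lam_minus \<beta> = (1 - sqrt \<beta>)\<^sup>2"

definition lam_t_minus :: "real \<Rightarrow> real" where
  "lam_t_minus \<beta> = (if \<beta> \<ge> 1 then 0 else lam_minus \<beta>)"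

text \<open>Marchenko-Pastur law mu_lambda: atom of weight (1-1/beta)^+ at 0 plus the
  absolutely continuous part with density mp_density.\<close>
definition mp_atom :: "real \<Rightarrow> real" where
  "mp_atom \<beta> = max (1 - 1 / \<beta>) 0"

definition mp_density :: "real \<Rightarrow> real \<Rightarrow> real" where
  "mp_density \<beta> l =
     sqrt (max (l - lam_minus \<beta>) 0 * max (lam_plus \<beta> - l) 0) / (2 * pi * \<beta> * l)"

definition mp_int :: "real \<Rightarrow> (real \<Rightarrow> real) \<Rightarrow> real" where
  "mp_int \<beta> f = mp_atom \<beta> * f 0 + (\<integral>l. mp_density \<beta> l * f l \<partial>lborel)"

definition mp_eint :: "real \<Rightarrow> (real \<Rightarrow> ereal) \<Rightarrow> ereal" where
  "mp_eint \<beta> g =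
     ereal (mp_atom \<beta>) * g 0
     + enn2ereal (\<integral>\<^sup>+ l. ennreal (mp_density \<beta> l) * e2ennreal (max (g l) 0) \<partial>lborel)
     - enn2ereal (\<integral>\<^sup>+ l. ennreal (mp_density \<beta> l) * e2ennreal (max (- g l) 0) \<partial>lborel)"

definition lam_bar :: "real \<Rightarrow> real" where
  "lam_bar \<beta> = mp_int \<beta> (\<lambda>l. l)"

definition neglog :: "real \<Rightarrow> ereal" where
  "neglog u = (if u > 0 then ereal (- ln u) else \<infinity>)"

definition psiM :: "real \<Rightarrow> real \<Rightarrow> real \<Rightarrow> real \<Rightarrow> real" where
  "psiM \<beta> x M \<alpha> =
     mp_int \<beta> (\<lambda>l. ln (EY (\<lambda>y. exp (\<alpha> * (l - x) * y)) {y. \<bar>y\<bar> \<le> M}))"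

definition psiYM :: "real \<Rightarrow> real \<Rightarrow> real \<Rightarrow> real \<Rightarrow> real" where
  "psiYM \<beta> x M \<alpha> =
     mp_int \<beta> (\<lambda>l. ln (\<integral>y. exp (\<alpha> * (l - x) * y) \<partial>YMdist M))"

definition psi :: "real \<Rightarrow> real \<Rightarrow> real \<Rightarrow> real" where
  "psi \<beta> x \<alpha> = Lim at_top (\<lambda>M. psiM \<beta> x M \<alpha>)"

definition strictly_convex_on :: "real set \<Rightarrow> (real \<Rightarrow> real) \<Rightarrow> bool" where
  "strictly_convex_on S f \<longleftrightarrow> convex S \<and>
     (\<forall>a\<in>S. \<forall>b\<in>S. \<forall>u. a \<noteq> b \<and> 0 < u \<and> u < 1 \<longrightarrow>
        f ((1 - u) * a + u * b) < (1 - u) * f a + u * f b)"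

end

theory Submission
  imports Defs "HOL-Real_Asymp.Real_Asymp"
begin

text \<open>
  Since \<open>Y\<close> has density \<open>exp (-y)\<close>, the truncated moment \<open>E\<^sub>Y[exp (c Y); |Y| \<le> M]\<close> equals
  \<open>G(c, M) = \<integral>\<^sub>0\<^sup>M exp ((c - 1) y) dy\<close>, which is known in closed form. Thus \<open>\<psi>\<^sub>x\<^sub>,\<^sub>M(\<alpha>)\<close>
  is the integral of \<open>log G(\<alpha> (\<lambda> - x), M)\<close> against the compactly supported law \<open>\<mu>\<^sub>\<lambda>\<close>, and
  \<open>\<psi>\<^sub>x\<^sub>,\<^sub>Y\<^sub>M\<close> differs from it by the constant \<open>log G(0, M)\<close>.

  Everything follows from properties of \<open>log G\<close>: it is \<open>M\<close>-Lipschitz in \<open>c\<close>, which gives (1)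
  and differentiation under the integral sign; it increases in \<open>M\<close> to \<open>-log (1 - c)\<close>, or to
  \<open>+\<infinity>\<close> if \<open>c \<ge> 1\<close>, which gives (2) by monotone convergence; it is strictly convex in \<open>c\<close> by
  Hoelder's inequality, as is \<open>-log\<close>, which gives (3). For (4), the derivative
  \<open>\<psi>'\<^sub>x\<^sub>,\<^sub>M(\<alpha>) = \<integral> (\<lambda> - x) m(\<alpha> (\<lambda> - x), M) d\<mu>\<^sub>\<lambda>\<close>, with \<open>m\<close> the mean of the exponentially
  tilted truncated law, is continuous in \<open>\<alpha>\<close>; at \<open>\<alpha> = 0\<close> it equals \<open>m(0, M) (lam_bar - x)\<close>
  with \<open>m(0, M) \<rightarrow> 1\<close>, and as \<open>\<alpha> \<rightarrow> \<infinity>\<close> (resp. \<open>-\<infinity>\<close>) it tends to \<open>M \<integral> (\<lambda> - x)\<^sup>+ d\<mu>\<^sub>\<lambda>\<close>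
  (resp. \<open>-M \<integral> (x - \<lambda>)\<^sup>+ d\<mu>\<^sub>\<lambda>\<close>), which is nonzero because \<open>x\<close> lies strictly inside the
  support. For large \<open>M\<close> the intermediate value theorem therefore applies.
\<close>

section \<open>Strict convexity\<close>

lemma strictly_convex_onD:
  assumes "strictly_convex_on S f" "a \<in> S" "b \<in> S" "a \<noteq> b" "0 < u" "u < 1"
  shows "f ((1 - u) * a + u * b) < (1 - u) * f a + u * f b"
  using assms unfolding strictly_convex_on_def by blast

lemma strictly_convex_onD_le:
  assumes "strictly_convex_on S f" "a \<in> S" "b \<in> S" "0 < u" "u < 1"
  shows "f ((1 - u) * a + u * b) \<le> (1 - u) * f a + u * f b"
proof (cases "a = b")
  case True
  then show ?thesis by (simp add: algebra_simps)
next
  case False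
  then show ?thesis using strictly_convex_onD[OF assms(1-3) False assms(4,5)] by simp
qed

lemma strictly_convex_on_cong:
  assumes "strictly_convex_on S g" and "\<And>z. z \<in> S \<Longrightarrow> f z = g z"
  shows "strictly_convex_on S f"
proof -
  have S: "convex S" using assms(1) unfolding strictly_convex_on_def by simp
  have "(1 - u) * a + u * b \<in> S" if "a \<in> S" "b \<in> S" "0 < u" "u < 1" for a b u
    using convexD[OF S that(1,2), of "1 - u" u] that by simp
  with assms show ?thesis unfolding strictly_convex_on_def by simp
qed

lemma strictly_convex_on_diff_const:
  "strictly_convex_on S f \<Longrightarrow> strictly_convex_on S (\<lambda>z. f z - c)"
  unfolding strictly_convex_on_def by (auto simp: algebra_simps)

lemma strictly_convex_onI_deriv:
  fixes f f' :: "real \<Rightarrow> real"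
  assumes S: "convex S" and f': "\<And>z. z \<in> S \<Longrightarrow> (f has_real_derivative f' z) (at z)"
    and mono: "\<And>z w. z \<in> S \<Longrightarrow> w \<in> S \<Longrightarrow> z < w \<Longrightarrow> f' z < f' w"
  shows "strictly_convex_on S f"
proof -
  have between: "t \<in> S" if "a \<in> S" "b \<in> S" "a \<le> t" "t \<le> b" for a b t
    using mem_is_interval_1_I[of S a b t] S that by (simp add: is_interval_convex_1)
  have less: "f ((1 - u) * a + u * b) < (1 - u) * f a + u * f b"
    if ab: "a \<in> S" "b \<in> S" "a < b" and u: "0 < u" "u < 1" for a b u
  proof -
    define z where "z = (1 - u) * a + u * b"
    have za: "z - a = u * (b - a)" and bz: "b - z = (1 - u) * (b - a)"
      unfolding z_def by (simp_all add: algebra_simps)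
    have "0 < u * (b - a)" "0 < (1 - u) * (b - a)" using ab u by simp_all
    then have "a < z \<and> z < b" using za bz by linarith
    then have az: "a < z" "z < b" by auto
    obtain \<xi>1 where \<xi>1: "a < \<xi>1" "\<xi>1 < z" "f z - f a = (z - a) * f' \<xi>1"
      using MVT2[OF az(1), of f f'] f' between[OF ab(1,2)] az by force
    obtain \<xi>2 where \<xi>2: "z < \<xi>2" "\<xi>2 < b" "f b - f z = (b - z) * f' \<xi>2"
      using MVT2[OF az(2), of f f'] f' between[OF ab(1,2)] az by force
    have "f' \<xi>1 < f' \<xi>2" using mono between[OF ab(1,2)] \<xi>1 \<xi>2 az by auto
    then have "0 < u * (1 - u) * (b - a) * (f' \<xi>2 - f' \<xi>1)" using u ab by simp
    also have "\<dots> = u * (f b - f z) - (1 - u) * (f z - f a)"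
      unfolding \<xi>1(3) \<xi>2(3) za bz by (simp add: algebra_simps)
    finally show ?thesis unfolding z_def by (simp add: algebra_simps)
  qed
  show ?thesis unfolding strictly_convex_on_def
  proof (intro conjI S ballI allI impI)
    fix a b u :: real assume "a \<in> S" "b \<in> S" "a \<noteq> b \<and> 0 < u \<and> u < 1"
    then show "f ((1 - u) * a + u * b) < (1 - u) * f a + u * f b"
      using less[of a b u] less[of b a "1 - u"] by (cases "a < b") (auto simp: algebra_simps)
  qed
qed

lemma strictly_convex_on_exp: "strictly_convex_on UNIV exp"
  by (rule strictly_convex_onI_deriv[where f'=exp]) (auto intro: DERIV_exp)

lemma strictly_convex_on_minus_ln: "strictly_convex_on {0<..} (\<lambda>z. - ln z)"
  by (rule strictly_convex_onI_deriv[where f'="\<lambda>z. - (1 / z)"])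
     (auto intro!: derivative_eq_intros simp: field_simps)

section \<open>The Marchenko-Pastur law\<close>

lemma lam_plus_eq: "0 \<le> \<beta> \<Longrightarrow> lam_plus \<beta> = 1 + \<beta> + 2 * sqrt \<beta>"
  unfolding lam_plus_def by (simp add: power2_eq_square algebra_simps)

lemma lam_minus_eq: "0 \<le> \<beta> \<Longrightarrow> lam_minus \<beta> = 1 + \<beta> - 2 * sqrt \<beta>"
  unfolding lam_minus_def by (simp add: power2_eq_square algebra_simps)

lemma lam_minus_nonneg: "0 \<le> lam_minus \<beta>"
  unfolding lam_minus_def by simp

lemma lam_minus_less_lam_plus: "0 < \<beta> \<Longrightarrow> lam_minus \<beta> < lam_plus \<beta>"
  by (simp add: lam_plus_eq lam_minus_eq)

lemma sqrt_lam_minus_mult_lam_plus: "0 \<le> \<beta> \<Longrightarrow> sqrt (lam_minus \<beta> * lam_plus \<beta>) = \<bar>1 - \<beta>\<bar>"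
proof -
  assume "0 \<le> \<beta>"
  then have "(1 - sqrt \<beta>) * (1 + sqrt \<beta>) = 1 - \<beta>" by (simp add: algebra_simps)
  then have "lam_minus \<beta> * lam_plus \<beta> = (1 - \<beta>)\<^sup>2"
    unfolding lam_minus_def lam_plus_def by (metis power_mult_distrib)
  then show ?thesis by simp
qed

lemma lam_t_minus_le_lam_minus: "lam_t_minus \<beta> \<le> lam_minus \<beta>"
  unfolding lam_t_minus_def by (simp add: lam_minus_nonneg)

lemma lam_t_minus_eq_lam_minus: "\<beta> \<le> 1 \<Longrightarrow> lam_t_minus \<beta> = lam_minus \<beta>"
  unfolding lam_t_minus_def lam_minus_def by auto

lemma mp_atom_nonneg: "0 \<le> mp_atom \<beta>"
  unfolding mp_atom_def by simp

lemma mp_atom_pos_iff: "0 < \<beta> \<Longrightarrow> 0 < mp_atom \<beta> \<longleftrightarrow> 1 < \<beta>"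
  unfolding mp_atom_def by (auto simp: field_simps max_def)

lemma lam_t_minus_eq_0_if_mp_atom_pos: "0 < \<beta> \<Longrightarrow> 0 < mp_atom \<beta> \<Longrightarrow> lam_t_minus \<beta> = 0"
  unfolding lam_t_minus_def by (simp add: mp_atom_pos_iff)

lemma arcsin_affine_arg_shifts:
  fixes a b l :: real assumes "a < b"
  shows "1 + (2 * l - (a + b)) / (b - a) = 2 * (l - a) / (b - a)"
    and "1 - (2 * l - (a + b)) / (b - a) = 2 * (b - l) / (b - a)"
  using assms by (simp_all add: field_simps)

lemma arcsin_moebius_arg_shifts:
  fixes a b l :: real assumes "a < b" "l \<noteq> 0"
  shows "1 + ((a + b) * l - 2 * a * b) / (l * (b - a)) = 2 * b * (l - a) / (l * (b - a))"
    and "1 - ((a + b) * l - 2 * a * b) / (l * (b - a)) = 2 * a * (b - l) / (l * (b - a))"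
  using assms by (simp_all add: field_simps)

lemma one_minus_square_eq: "1 - (u::real)\<^sup>2 = (1 + u) * (1 - u)"
  by (simp add: power2_eq_square algebra_simps)

lemma has_real_derivative_arcsin_affine:
  fixes a b l :: real assumes "a < l" "l < b"
  shows "((\<lambda>l. arcsin ((2 * l - (a + b)) / (b - a))) has_real_derivative
           1 / sqrt ((l - a) * (b - l))) (at l)"
proof -
  let ?v = "(2 * l - (a + b)) / (b - a)"
  have ab: "a < b" and ba: "0 < b - a" and p: "0 < (l - a) * (b - l)" using assms by simp_all
  note sums = arcsin_affine_arg_shifts[OF ab, of l]
  have v: "-1 < ?v" "?v < 1" using sums assms by (simp_all add: field_simps)
  have "1 - ?v\<^sup>2 = 2\<^sup>2 * ((l - a) * (b - l)) / (b - a)\<^sup>2"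
    unfolding one_minus_square_eq sums using ba
    by (simp add: field_simps power2_eq_square; simp add: algebra_simps)
  then have "sqrt (1 - ?v\<^sup>2) = 2 * sqrt ((l - a) * (b - l)) / (b - a)"
    using ba by (simp add: real_sqrt_mult real_sqrt_divide)
  moreover have "((\<lambda>l. 2 * l - (a + b)) has_real_derivative 2) (at l)"
    by (auto intro!: derivative_eq_intros)
  note DERIV_chain2[OF DERIV_arcsin[OF v] DERIV_cdivide[OF this, of "b - a"]]
  ultimately show ?thesis using ba p by (simp add: field_simps)
qed

lemma has_real_derivative_arcsin_moebius:
  fixes a b l :: real assumes "0 \<le> a" "a < l" "l < b"
  shows "((\<lambda>l. sqrt (a * b) * arcsin (((a + b) * l - 2 * a * b) / (l * (b - a))))
           has_real_derivative a * b / (l * sqrt ((l - a) * (b - l)))) (at l)"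
proof (cases "a = 0")
  case False
  let ?u = "((a + b) * l - 2 * a * b) / (l * (b - a))"
  have ba: "0 < b - a" and l: "0 < l" and p: "0 < (l - a) * (b - l)" and ab: "0 < a * b"
    using assms False by simp_all
  note sums = arcsin_moebius_arg_shifts[OF _ less_imp_neq[OF l, symmetric], OF ba[unfolded diff_gt_0_iff_gt]]
  have u: "-1 < ?u" "?u < 1" using sums assms False l by (simp_all add: field_simps)
  have "1 - ?u\<^sup>2 = 2\<^sup>2 * (a * b) * ((l - a) * (b - l)) / (l * (b - a))\<^sup>2"
    unfolding one_minus_square_eq sums using ba l
    by (simp add: field_simps power2_eq_square; simp add: algebra_simps)
  then have sq: "sqrt (1 - ?u\<^sup>2) = 2 * sqrt (a * b) * sqrt ((l - a) * (b - l)) / (l * (b - a))"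
    using ba l by (simp add: real_sqrt_mult real_sqrt_divide)
  have "(a + b) * (l * (b - a)) - ((a + b) * l - 2 * a * b) * (b - a) = 2 * a * b * (b - a)"
    by (simp add: algebra_simps)
  moreover have "((\<lambda>l. ((a + b) * l - 2 * a * b) / (l * (b - a))) has_real_derivative
    ((a + b) * (l * (b - a)) - ((a + b) * l - 2 * a * b) * (b - a)) / (l * (b - a) * (l * (b - a)))) (at l)"
    using l ba by (intro DERIV_divide) (auto intro!: derivative_eq_intros)
  ultimately have "((\<lambda>l. ((a + b) * l - 2 * a * b) / (l * (b - a))) has_real_derivative
      2 * (sqrt (a * b) * sqrt (a * b)) / (l\<^sup>2 * (b - a))) (at l)"
    using l ba ab by (simp add: power2_eq_square mult.assoc)
  from DERIV_cmult[OF DERIV_chain2[OF DERIV_arcsin[OF u] this], of "sqrt (a * b)"]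
  have d: "((\<lambda>l. sqrt (a * b) * arcsin (((a + b) * l - 2 * a * b) / (l * (b - a)))) has_real_derivative
      sqrt (a * b) * (inverse (sqrt (1 - ?u\<^sup>2)) * (2 * (sqrt (a * b) * sqrt (a * b)) / (l\<^sup>2 * (b - a))))) (at l)" .
  have "q * (inverse (2 * q * w / (l * d)) * (2 * (q * q) / (l\<^sup>2 * d))) = q * q / (l * w)"
    if "0 < w" "0 < d" "0 < q" for w d q :: real
    using that l by (simp add: field_simps power2_eq_square)
  from this[of "sqrt ((l - a) * (b - l))" "b - a" "sqrt (a * b)"]
  have "sqrt (a * b) * (inverse (sqrt (1 - ?u\<^sup>2)) * (2 * (sqrt (a * b) * sqrt (a * b)) / (l\<^sup>2 * (b - a))))
      = a * b / (l * sqrt ((l - a) * (b - l)))"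
    unfolding sq using ab ba p by (simp add: mult.assoc)
  with d show ?thesis by (rule DERIV_cong)
qed simp

lemma has_real_derivative_sqrt_arc:
  fixes a b l :: real assumes "a < l" "l < b"
  shows "((\<lambda>l. sqrt ((l - a) * (b - l))) has_real_derivative
           (a + b - 2 * l) / (2 * sqrt ((l - a) * (b - l)))) (at l)"
proof -
  have p: "(l - a) * (b - l) > 0" using assms by simp
  have "((\<lambda>l. (l - a) * (b - l)) has_real_derivative (b - l) - (l - a)) (at l)"
    by (auto intro!: derivative_eq_intros)
  from DERIV_chain2[OF DERIV_real_sqrt[OF p] this] show ?thesis
    using p by (simp add: field_simps)
qed

definition arc_primitive :: "real \<Rightarrow> real \<Rightarrow> real \<Rightarrow> real" where
  "arc_primitive a b l = sqrt ((l - a) * (b - l)) + (a + b) / 2 * arcsin ((2 * l - (a + b)) / (b - a))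
     - sqrt (a * b) * arcsin (((a + b) * l - 2 * a * b) / (l * (b - a)))"

lemma has_real_derivative_arc_primitive:
  fixes a b l :: real assumes a: "0 \<le> a" and l: "a < l" "l < b"
  shows "(arc_primitive a b has_real_derivative sqrt ((l - a) * (b - l)) / l) (at l)"
proof -
  define w where "w = sqrt ((l - a) * (b - l))"
  have w: "w > 0" "w\<^sup>2 = (l - a) * (b - l)" unfolding w_def using l by simp_all
  have l0: "l > 0" using a l by simp
  have d: "(arc_primitive a b has_real_derivative
      (a + b - 2 * l) / (2 * w) + (a + b) / 2 * (1 / w) - a * b / (l * w)) (at l)"
    unfolding arc_primitive_def[abs_def] w_def
    by (intro DERIV_diff DERIV_add DERIV_cmult has_real_derivative_sqrt_arc
        has_real_derivative_arcsin_affine has_real_derivative_arcsin_moebius l a)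
  have "(a + b - 2 * l) / (2 * w) + (a + b) / 2 * (1 / w) - a * b / (l * w)
      = ((a + b - 2 * l) * l + (a + b) * l - 2 * a * b) / (2 * l * w)"
    using w(1) l0 by (simp add: field_simps)
  also have "(a + b - 2 * l) * l + (a + b) * l - 2 * a * b = 2 * w\<^sup>2"
    unfolding w(2) by (simp add: algebra_simps)
  also have "2 * w\<^sup>2 / (2 * l * w) = w / l"
    using w(1) l0 by (simp add: power2_eq_square)
  finally show ?thesis using d by (simp add: w_def)
qed

lemma continuous_on_arc_primitive:
  fixes a b :: real assumes a: "0 \<le> a" and ab: "a < b"
  shows "continuous_on {a..b} (arc_primitive a b)"
proof -
  have "-1 \<le> (2 * l - (a + b)) / (b - a) \<and> (2 * l - (a + b)) / (b - a) \<le> 1" if "l \<in> {a..b}" for l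
    using arcsin_affine_arg_shifts[OF ab, of l] that ab by (auto simp: field_simps)
  moreover have "-1 \<le> ((a + b) * l - 2 * a * b) / (l * (b - a)) \<and> ((a + b) * l - 2 * a * b) / (l * (b - a)) \<le> 1"
    if "l \<in> {a..b}" "0 < a" for l
  proof -
    have "l \<noteq> 0" using that by auto
    note shifts = arcsin_moebius_arg_shifts[OF ab this]
    have "0 \<le> 2 * b * (l - a) / (l * (b - a))" "0 \<le> 2 * a * (b - l) / (l * (b - a))"
      using that ab by simp_all
    then show ?thesis using shifts by linarith
  qed
  ultimately show ?thesis
    unfolding arc_primitive_def[abs_def] using a ab
    by (cases "a = 0") (auto intro!: continuous_intros)
qed

lemma has_integral_sqrt_arc_div:
  fixes a b :: real assumes a: "0 \<le> a" and ab: "a < b"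
  shows "((\<lambda>l. sqrt ((l - a) * (b - l)) / l) has_integral (pi * ((a + b) / 2 - sqrt (a * b)))) {a..b}"
proof -
  have "(2 * b - (a + b)) / (b - a) = 1" "(2 * a - (a + b)) / (b - a) = -1"
    using arcsin_affine_arg_shifts[OF ab, of a] arcsin_affine_arg_shifts[OF ab, of b] ab by simp_all
  moreover have "((a + b) * b - 2 * a * b) / (b * (b - a)) = 1"
    using arcsin_moebius_arg_shifts(2)[OF ab, of b] ab a by simp
  moreover have "((a + b) * a - 2 * a * b) / (a * (b - a)) = -1" if "a \<noteq> 0"
    using arcsin_moebius_arg_shifts(1)[OF ab that] by simp
  ultimately have "arc_primitive a b b - arc_primitive a b a = pi * ((a + b) / 2 - sqrt (a * b))"
    by (cases "a = 0") (simp_all add: arc_primitive_def arcsin_minus algebra_simps)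
  moreover have "((\<lambda>l. sqrt ((l - a) * (b - l)) / l) has_integral (arc_primitive a b b - arc_primitive a b a)) {a..b}"
    using a ab has_real_derivative_arc_primitive[of a]
    by (intro fundamental_theorem_of_calculus_interior continuous_on_arc_primitive)
       (auto simp: has_real_derivative_iff_has_vector_derivative)
  ultimately show ?thesis by simp
qed

definition mp_support :: "real \<Rightarrow> real set" where
  "mp_support \<beta> = {lam_minus \<beta>..lam_plus \<beta>} \<union> {l. l = 0 \<and> 0 < mp_atom \<beta>}"

lemma mp_support_subset: "0 < \<beta> \<Longrightarrow> mp_support \<beta> \<subseteq> {lam_t_minus \<beta>..lam_plus \<beta>}"
  using lam_t_minus_le_lam_minus[of \<beta>] lam_minus_nonneg[of \<beta>] lam_minus_less_lam_plus[of \<beta>]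
  by (auto simp: mp_support_def lam_t_minus_eq_0_if_mp_atom_pos)

lemma mp_density_eq_0:
  "l \<le> lam_minus \<beta> \<or> lam_plus \<beta> \<le> l \<Longrightarrow> mp_density \<beta> l = 0"
  unfolding mp_density_def by auto

lemma mp_density_nonneg: "0 < \<beta> \<Longrightarrow> 0 \<le> mp_density \<beta> l"
  unfolding mp_density_def using lam_minus_nonneg[of \<beta>]
  by (cases "l \<le> lam_minus \<beta>") auto

lemma mp_density_pos: "0 < \<beta> \<Longrightarrow> lam_minus \<beta> < l \<Longrightarrow> l < lam_plus \<beta> \<Longrightarrow> 0 < mp_density \<beta> l"
  unfolding mp_density_def using lam_minus_nonneg[of \<beta>] by simp

lemma borel_measurable_mp_density [measurable]: "mp_density \<beta> \<in> borel_measurable borel"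
  unfolding mp_density_def[abs_def] by measurable

lemma has_integral_mp_density:
  assumes "0 < \<beta>"
  shows "(mp_density \<beta> has_integral (min 1 \<beta> / \<beta>)) UNIV"
proof -
  let ?a = "lam_minus \<beta>" and ?b = "lam_plus \<beta>"
  have "((\<lambda>l. sqrt ((l - ?a) * (?b - l)) / l) has_integral (pi * ((?a + ?b) / 2 - sqrt (?a * ?b)))) {?a..?b}"
    using assms by (intro has_integral_sqrt_arc_div lam_minus_nonneg lam_minus_less_lam_plus)
  also have "pi * ((?a + ?b) / 2 - sqrt (?a * ?b)) = 2 * pi * min 1 \<beta>"
  proof -
    have "?a + ?b = 2 + 2 * \<beta>" using assms by (simp add: lam_plus_eq lam_minus_eq)
    moreover have "sqrt (?a * ?b) = \<bar>1 - \<beta>\<bar>" using assms by (simp add: sqrt_lam_minus_mult_lam_plus)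
    ultimately
    show ?thesis by (auto simp: min_def field_simps)
  qed
  finally have "((\<lambda>l. sqrt ((l - ?a) * (?b - l)) / l / (2 * pi * \<beta>)) has_integral
      (2 * pi * min 1 \<beta> / (2 * pi * \<beta>))) {?a..?b}"
    by (rule has_integral_divide)
  then have "(mp_density \<beta> has_integral (min 1 \<beta> / \<beta>)) {?a..?b}"
    using assms by (subst has_integral_cong[where g="\<lambda>l. sqrt ((l - ?a) * (?b - l)) / l / (2 * pi * \<beta>)"])
                   (auto simp: mp_density_def)
  then show ?thesis
    by (rule has_integral_on_superset) (auto intro: mp_density_eq_0)
qed

lemma integrable_mp_density:
  assumes "0 < \<beta>" shows "integrable lborel (mp_density \<beta>)"
proof -
  have "mp_density \<beta> absolutely_integrable_on UNIV"
    using has_integral_mp_density[OF assms] mp_density_nonneg[OF assms]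
    by (intro nonnegative_absolutely_integrable_1) (auto simp: has_integral_integrable)
  then show ?thesis by (simp add: set_integrable_def integrable_completion)
qed

lemma mp_total_mass:
  assumes "0 < \<beta>" shows "mp_atom \<beta> + (\<integral>l. mp_density \<beta> l \<partial>lborel) = 1"
proof -
  have "(\<integral>l. mp_density \<beta> l \<partial>lborel) = min 1 \<beta> / \<beta>"
    using integral_lborel[OF integrable_mp_density[OF assms]] has_integral_mp_density[OF assms]
    by (simp add: integral_unique)
  then show ?thesis using assms by (auto simp: mp_atom_def min_def max_def field_simps)
qed

lemma norm_mp_density_mult_le:
  assumes "0 < \<beta>" and "l \<in> {lam_minus \<beta>..lam_plus \<beta>} \<Longrightarrow> \<bar>v\<bar> \<le> C"
  shows "norm (mp_density \<beta> l * v) \<le> \<bar>C\<bar> * mp_density \<beta> l"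
proof (cases "l \<in> {lam_minus \<beta>..lam_plus \<beta>}")
  case True
  then have "mp_density \<beta> l * \<bar>v\<bar> \<le> mp_density \<beta> l * \<bar>C\<bar>"
    using assms mp_density_nonneg by (intro mult_left_mono) force+
  then show ?thesis using mp_density_nonneg[OF assms(1)] by (simp add: abs_mult mult.commute)
next
  case False
  then show ?thesis by (auto simp: mp_density_eq_0)
qed

lemma integrable_mp_density_mult:
  assumes "0 < \<beta>" and "f \<in> borel_measurable borel"
    and "\<And>l. l \<in> {lam_minus \<beta>..lam_plus \<beta>} \<Longrightarrow> \<bar>f l\<bar> \<le> B"
  shows "integrable lborel (\<lambda>l. mp_density \<beta> l * f l)"
proof (rule Bochner_Integration.integrable_bound)
  show "integrable lborel (\<lambda>l. \<bar>B\<bar> * mp_density \<beta> l)"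
    using assms(1) by (intro integrable_mult_right integrable_mp_density)
  show "AE l in lborel. norm (mp_density \<beta> l * f l) \<le> norm (\<bar>B\<bar> * mp_density \<beta> l)"
    using norm_mp_density_mult_le[OF assms(1) assms(3)] mp_density_nonneg[OF assms(1)] by simp
qed (use assms(2) in measurable)

lemma integrable_mp_density_mult_continuous_on:
  assumes "0 < \<beta>" and "f \<in> borel_measurable borel"
    and "continuous_on {lam_minus \<beta>..lam_plus \<beta>} f"
  shows "integrable lborel (\<lambda>l. mp_density \<beta> l * f l)"
proof -
  have "compact (f ` {lam_minus \<beta>..lam_plus \<beta>})"
    by (intro compact_continuous_image assms) auto
  then obtain B where "\<forall>y \<in> f ` {lam_minus \<beta>..lam_plus \<beta>}. norm y \<le> B"
    using compact_imp_bounded bounded_iff by metis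
  then show ?thesis by (intro integrable_mp_density_mult[OF assms(1,2)]) auto
qed

lemma integrable_mp_density_mult_continuous:
  "0 < \<beta> \<Longrightarrow> continuous_on UNIV f \<Longrightarrow> integrable lborel (\<lambda>l. mp_density \<beta> l * f l)"
  by (rule integrable_mp_density_mult_continuous_on)
     (auto intro: borel_measurable_continuous_onI continuous_on_subset)

lemma integral_strict_mono_lborel:
  fixes f g :: "real \<Rightarrow> real"
  assumes f: "integrable lborel f" and g: "integrable lborel g" and le: "\<And>x. f x \<le> g x"
    and "p < q" and less: "\<And>x. p < x \<Longrightarrow> x < q \<Longrightarrow> f x < g x"
  shows "integral\<^sup>L lborel f < integral\<^sup>L lborel g"
proof -
  have "integral\<^sup>L lborel f \<noteq> integral\<^sup>L lborel g"
  proof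
    assume "integral\<^sup>L lborel f = integral\<^sup>L lborel g"
    then have "integral\<^sup>L lborel (\<lambda>x. g x - f x) = 0" using f g by simp
    then have "AE x in lborel. g x - f x = 0"
      using integral_nonneg_eq_0_iff_AE[of lborel "\<lambda>x. g x - f x"] f g le by simp
    then have "AE x in lborel. x \<notin> {p<..<q}"
      by eventually_elim (use less in force)
    then have "emeasure lborel {p<..<q} = 0"
      by (subst (asm) AE_iff_measurable[of "{p<..<q}"]) auto
    then show False using \<open>p < q\<close> by simp
  qed
  moreover have "integral\<^sup>L lborel f \<le> integral\<^sup>L lborel g" using f g le by (intro integral_mono)
  ultimately show ?thesis by simp
qed

lemma mp_weights_mono:
  assumes "0 < \<beta>" and "\<And>l. l \<in> mp_support \<beta> \<Longrightarrow> f l \<le> g l"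
  shows "mp_density \<beta> l * f l \<le> mp_density \<beta> l * g l" and "mp_atom \<beta> * f 0 \<le> mp_atom \<beta> * g 0"
proof -
  show "mp_density \<beta> l * f l \<le> mp_density \<beta> l * g l"
    using assms(2)[of l] mp_density_nonneg[OF assms(1), of l]
    by (cases "l \<in> {lam_minus \<beta>..lam_plus \<beta>}")
       (auto intro: mult_left_mono simp: mp_density_eq_0 mp_support_def)
  show "mp_atom \<beta> * f 0 \<le> mp_atom \<beta> * g 0"
    using assms(2)[of 0] mp_atom_nonneg[of \<beta>]
    by (cases "0 < mp_atom \<beta>") (auto simp: mp_support_def)
qed

lemma mp_int_mono:
  assumes "0 < \<beta>"
    and "integrable lborel (\<lambda>l. mp_density \<beta> l * f l)"
    and "integrable lborel (\<lambda>l. mp_density \<beta> l * g l)"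
    and "\<And>l. l \<in> mp_support \<beta> \<Longrightarrow> f l \<le> g l"
  shows "mp_int \<beta> f \<le> mp_int \<beta> g"
  unfolding mp_int_def using assms(2,3) mp_weights_mono[where f=f and g=g, OF assms(1,4)]
  by (intro add_mono integral_mono) auto

lemma mp_int_strict_mono:
  assumes "0 < \<beta>"
    and f: "integrable lborel (\<lambda>l. mp_density \<beta> l * f l)"
    and g: "integrable lborel (\<lambda>l. mp_density \<beta> l * g l)"
    and le: "\<And>l. l \<in> mp_support \<beta> \<Longrightarrow> f l \<le> g l"
    and pq: "lam_minus \<beta> \<le> p" "p < q" "q \<le> lam_plus \<beta>"
    and less: "\<And>l. p < l \<Longrightarrow> l < q \<Longrightarrow> f l < g l"
  shows "mp_int \<beta> f < mp_int \<beta> g"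
proof -
  have "mp_density \<beta> l * f l < mp_density \<beta> l * g l" if "p < l" "l < q" for l
    using that pq less[OF that] mp_density_pos[OF assms(1), of l] by simp
  then have "(\<integral>l. mp_density \<beta> l * f l \<partial>lborel) < (\<integral>l. mp_density \<beta> l * g l \<partial>lborel)"
    using pq(2) mp_weights_mono(1)[where f=f and g=g, OF assms(1) le]
    by (intro integral_strict_mono_lborel[OF f g])
  then show ?thesis
    unfolding mp_int_def using mp_weights_mono(2)[where f=f and g=g, OF assms(1) le] by simp
qed

lemma mp_int_cmult: "mp_int \<beta> (\<lambda>l. c * f l) = c * mp_int \<beta> f"
  unfolding mp_int_def by (simp add: algebra_simps)

lemma mp_int_add:
  assumes "integrable lborel (\<lambda>l. mp_density \<beta> l * f l)"
    and "integrable lborel (\<lambda>l. mp_density \<beta> l * g l)"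
  shows "mp_int \<beta> (\<lambda>l. f l + g l) = mp_int \<beta> f + mp_int \<beta> g"
  unfolding mp_int_def using assms by (simp add: distrib_left)

lemma mp_int_diff:
  assumes "integrable lborel (\<lambda>l. mp_density \<beta> l * f l)"
    and "integrable lborel (\<lambda>l. mp_density \<beta> l * g l)"
  shows "mp_int \<beta> (\<lambda>l. f l - g l) = mp_int \<beta> f - mp_int \<beta> g"
  unfolding mp_int_def using assms by (simp add: right_diff_distrib)

lemma mp_int_const: "0 < \<beta> \<Longrightarrow> mp_int \<beta> (\<lambda>_. c) = c"
  using mp_total_mass[of \<beta>] unfolding mp_int_def by (simp flip: distrib_right)

lemma strictly_convex_on_mp_int:
  assumes "0 < \<beta>" and "x < lam_plus \<beta>" and S: "convex S"
    and int: "\<And>\<alpha>. \<alpha> \<in> S \<Longrightarrow> integrable lborel (\<lambda>l. mp_density \<beta> l * F \<alpha> l)"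
    and le: "\<And>\<alpha>1 \<alpha>2 u l. \<alpha>1 \<in> S \<Longrightarrow> \<alpha>2 \<in> S \<Longrightarrow> 0 < u \<Longrightarrow> u < 1 \<Longrightarrow> l \<in> mp_support \<beta> \<Longrightarrow>
       F ((1 - u) * \<alpha>1 + u * \<alpha>2) l \<le> (1 - u) * F \<alpha>1 l + u * F \<alpha>2 l"
    and less: "\<And>\<alpha>1 \<alpha>2 u l. \<alpha>1 \<in> S \<Longrightarrow> \<alpha>2 \<in> S \<Longrightarrow> \<alpha>1 \<noteq> \<alpha>2 \<Longrightarrow> 0 < u \<Longrightarrow> u < 1 \<Longrightarrow>
       lam_minus \<beta> < l \<Longrightarrow> l < lam_plus \<beta> \<Longrightarrow> l \<noteq> x \<Longrightarrow>
       F ((1 - u) * \<alpha>1 + u * \<alpha>2) l < (1 - u) * F \<alpha>1 l + u * F \<alpha>2 l"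
  shows "strictly_convex_on S (\<lambda>\<alpha>. mp_int \<beta> (F \<alpha>))"
  unfolding strictly_convex_on_def
proof (intro conjI S ballI allI impI)
  fix \<alpha>1 \<alpha>2 u :: real assume \<alpha>: "\<alpha>1 \<in> S" "\<alpha>2 \<in> S" and "\<alpha>1 \<noteq> \<alpha>2 \<and> 0 < u \<and> u < 1"
  then have u: "0 < u" "u < 1" and ne: "\<alpha>1 \<noteq> \<alpha>2" by auto
  have "(1 - u) * \<alpha>1 + u * \<alpha>2 \<in> S" using convexD[OF S \<alpha>, of "1 - u" u] u by simp
  then have "mp_int \<beta> (F ((1 - u) * \<alpha>1 + u * \<alpha>2)) < mp_int \<beta> (\<lambda>l. (1 - u) * F \<alpha>1 l + u * F \<alpha>2 l)"
    using \<alpha> u ne int lam_minus_less_lam_plus[OF assms(1)] assms(1,2)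
    by (intro mp_int_strict_mono[where p = "max (lam_minus \<beta>) x" and q = "lam_plus \<beta>"] le less)
       (auto simp: algebra_simps)
  also have "\<dots> = (1 - u) * mp_int \<beta> (F \<alpha>1) + u * mp_int \<beta> (F \<alpha>2)"
  proof -
    have "integrable lborel (\<lambda>l. mp_density \<beta> l * (c * F a l))" if "a \<in> S" for a c
      using integrable_mult_right[OF int[OF that], of c] by (simp add: ac_simps)
    then show ?thesis using \<alpha> by (simp add: mp_int_add mp_int_cmult)
  qed
  finally show "mp_int \<beta> (F ((1 - u) * \<alpha>1 + u * \<alpha>2)) < (1 - u) * mp_int \<beta> (F \<alpha>1) + u * mp_int \<beta> (F \<alpha>2)" .
qed

lemma has_real_derivative_mp_int:
  fixes F F' :: "real \<Rightarrow> real \<Rightarrow> real"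
  assumes "0 < \<beta>"
    and [measurable]: "\<And>\<alpha>. F \<alpha> \<in> borel_measurable borel" "\<And>\<alpha>. F' \<alpha> \<in> borel_measurable borel"
    and deriv: "\<And>\<alpha> l. ((\<lambda>\<alpha>. F \<alpha> l) has_real_derivative F' \<alpha> l) (at \<alpha>)"
    and lip: "\<And>\<alpha>1 \<alpha>2 l. l \<in> {lam_minus \<beta>..lam_plus \<beta>} \<Longrightarrow> \<bar>F \<alpha>1 l - F \<alpha>2 l\<bar> \<le> C * \<bar>\<alpha>1 - \<alpha>2\<bar>"
    and int: "\<And>\<alpha>. integrable lborel (\<lambda>l. mp_density \<beta> l * F \<alpha> l)"
  shows "((\<lambda>\<alpha>. mp_int \<beta> (F \<alpha>)) has_real_derivative mp_int \<beta> (F' \<alpha>0)) (at \<alpha>0)"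
proof -
  let ?I = "\<lambda>\<alpha>. (\<integral>l. mp_density \<beta> l * F \<alpha> l \<partial>lborel)"
  let ?q = "\<lambda>\<alpha> l. mp_density \<beta> l * ((F \<alpha> l - F \<alpha>0 l) / (\<alpha> - \<alpha>0))"
  have quotient: "(?I \<alpha> - ?I \<alpha>0) / (\<alpha> - \<alpha>0) = (\<integral>l. ?q \<alpha> l \<partial>lborel)" for \<alpha>
    using int[of \<alpha>] int[of \<alpha>0] by (simp add: right_diff_distrib)
  have "(?I has_real_derivative (\<integral>l. mp_density \<beta> l * F' \<alpha>0 l \<partial>lborel)) (at \<alpha>0)"
    unfolding has_field_derivative_iff tendsto_at_iff_sequentially comp_def quotient
  proof (intro allI impI)
    fix X :: "nat \<Rightarrow> real" assume X: "\<forall>i. X i \<in> UNIV - {\<alpha>0}" and "X \<longlonglongrightarrow> \<alpha>0"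
    show "(\<lambda>n. \<integral>l. ?q (X n) l \<partial>lborel) \<longlonglongrightarrow> (\<integral>l. mp_density \<beta> l * F' \<alpha>0 l \<partial>lborel)"
    proof (rule integral_dominated_convergence[where w="\<lambda>l. \<bar>C\<bar> * mp_density \<beta> l"])
      show "integrable lborel (\<lambda>l. \<bar>C\<bar> * mp_density \<beta> l)"
        using assms(1) by (intro integrable_mult_right integrable_mp_density)
      show "AE l in lborel. (\<lambda>n. ?q (X n) l) \<longlonglongrightarrow> mp_density \<beta> l * F' \<alpha>0 l"
        using deriv X \<open>X \<longlonglongrightarrow> \<alpha>0\<close>
        unfolding has_field_derivative_iff tendsto_at_iff_sequentially comp_def
        by (intro AE_I2 tendsto_mult tendsto_const) blast
      show "AE l in lborel. norm (?q (X n) l) \<le> \<bar>C\<bar> * mp_density \<beta> l" for n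
        using lip[of _ "X n" \<alpha>0] X
        by (intro AE_I2 norm_mp_density_mult_le[OF assms(1)]) (simp add: abs_divide divide_le_eq)
    qed measurable
  qed
  then show ?thesis unfolding mp_int_def by (intro DERIV_add DERIV_cmult deriv)
qed

lemma continuous_on_mp_int:
  fixes F :: "real \<Rightarrow> real \<Rightarrow> real"
  assumes "0 < \<beta>" and [measurable]: "\<And>\<alpha>. F \<alpha> \<in> borel_measurable borel"
    and cont: "\<And>l. continuous_on UNIV (\<lambda>\<alpha>. F \<alpha> l)"
    and bound: "\<And>\<alpha> l. l \<in> {lam_minus \<beta>..lam_plus \<beta>} \<Longrightarrow> \<bar>F \<alpha> l\<bar> \<le> C"
  shows "continuous_on UNIV (\<lambda>\<alpha>. mp_int \<beta> (F \<alpha>))"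
proof -
  have "isCont (\<lambda>\<alpha>. \<integral>l. mp_density \<beta> l * F \<alpha> l \<partial>lborel) \<alpha>0" for \<alpha>0
  proof (rule continuous_at_sequentiallyI)
    fix X :: "nat \<Rightarrow> real" assume "X \<longlonglongrightarrow> \<alpha>0"
    then have "(\<lambda>n. F (X n) l) \<longlonglongrightarrow> F \<alpha>0 l" for l
      using cont[of l] unfolding continuous_on_eq_continuous_at[OF open_UNIV] continuous_at_sequentially
      by (simp add: comp_def)
    then show "(\<lambda>n. \<integral>l. mp_density \<beta> l * F (X n) l \<partial>lborel) \<longlonglongrightarrow> (\<integral>l. mp_density \<beta> l * F \<alpha>0 l \<partial>lborel)"
      using assms(1) bound
      by (intro integral_dominated_convergence[where w="\<lambda>l. \<bar>C\<bar> * mp_density \<beta> l"]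
          integrable_mult_right integrable_mp_density AE_I2 tendsto_mult tendsto_const
          norm_mp_density_mult_le) auto
  qed
  moreover have "isCont (\<lambda>\<alpha>. F \<alpha> 0) \<alpha>0" for \<alpha>0
    using cont[of 0] by (simp add: continuous_on_eq_continuous_at)
  ultimately show ?thesis unfolding mp_int_def
    by (intro continuous_at_imp_continuous_on ballI continuous_intros) auto
qed

lemma tendsto_mp_int_at_top:
  fixes F :: "real \<Rightarrow> real \<Rightarrow> real"
  assumes "0 < \<beta>"
    and [measurable]: "\<And>\<alpha>. F \<alpha> \<in> borel_measurable borel" "L \<in> borel_measurable borel"
    and lim: "\<And>l. ((\<lambda>\<alpha>. F \<alpha> l) \<longlongrightarrow> L l) at_top"
    and bound: "\<And>\<alpha> l. l \<in> {lam_minus \<beta>..lam_plus \<beta>} \<Longrightarrow> \<bar>F \<alpha> l\<bar> \<le> C"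
  shows "((\<lambda>\<alpha>. mp_int \<beta> (F \<alpha>)) \<longlongrightarrow> mp_int \<beta> L) at_top"
proof -
  have "((\<lambda>\<alpha>. \<integral>l. mp_density \<beta> l * F \<alpha> l \<partial>lborel) \<longlongrightarrow> (\<integral>l. mp_density \<beta> l * L l \<partial>lborel)) at_top"
    using assms(1) bound
    by (intro integral_dominated_convergence_at_top[where w="\<lambda>l. \<bar>C\<bar> * mp_density \<beta> l"]
        integrable_mult_right integrable_mp_density AE_I2 always_eventually allI
        tendsto_mult tendsto_const lim norm_mp_density_mult_le) auto
  then show ?thesis unfolding mp_int_def by (intro tendsto_add tendsto_mult tendsto_const lim)
qed

section \<open>The truncated exponential moment\<close>

text \<open>\<open>trunc_mgf c M = E\<^sub>Y[exp (c Y); |Y| \<le> M]\<close>; the factor \<open>exp (-y)\<close> is the density of \<open>Y\<close>.\<close>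
definition trunc_mgf :: "real \<Rightarrow> real \<Rightarrow> real" where
  "trunc_mgf c M = integral {0..M} (\<lambda>y. exp ((c - 1) * y))"

definition trunc_mgf_deriv :: "real \<Rightarrow> real \<Rightarrow> real" where
  "trunc_mgf_deriv c M = integral {0..M} (\<lambda>y. y * exp ((c - 1) * y))"

definition tilted_mean :: "real \<Rightarrow> real \<Rightarrow> real" where
  "tilted_mean c M = trunc_mgf_deriv c M / trunc_mgf c M"

lemma integrable_indicator_exp:
  fixes c M :: real shows "integrable lborel (\<lambda>y. indicator {0..M} y * exp ((c - 1) * y))"
proof -
  have "set_integrable lborel {0..M} (\<lambda>y. exp ((c - 1) * y))"
    by (rule borel_integrable_atLeastAtMost') (auto intro!: continuous_intros)
  then show ?thesis by (simp add: set_integrable_def)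
qed

lemma lborel_integral_eq_trunc_mgf:
  "(\<integral>y. indicator {0..M} y * exp ((c - 1) * y) \<partial>lborel) = trunc_mgf c M"
proof -
  have "set_integrable lborel {0..M} (\<lambda>y. exp ((c - 1) * y))"
    by (rule borel_integrable_atLeastAtMost') (auto intro!: continuous_intros)
  from set_borel_integral_eq_integral(2)[OF this]
  show ?thesis unfolding trunc_mgf_def set_lebesgue_integral_def by simp
qed

lemma EY_exp_eq_trunc_mgf: "EY (\<lambda>y. exp (c * y)) {y. \<bar>y\<bar> \<le> M} = trunc_mgf c M"
proof -
  have [measurable]: "exponential_density 1 \<in> borel_measurable borel"
    unfolding exponential_density_def[abs_def] by measurable
  have "exponential_density 1 y * (exp (c * y) * indicator {y. \<bar>y\<bar> \<le> M} y)
      = indicator {0..M} y * exp ((c - 1) * y)" for y :: real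
    by (auto simp: exponential_density_def indicator_def mult_exp_exp algebra_simps)
  then have "EY (\<lambda>y. exp (c * y)) {y. \<bar>y\<bar> \<le> M} = (\<integral>y. indicator {0..M} y * exp ((c - 1) * y) \<partial>lborel)"
    unfolding EY_def by (subst integral_density) (auto simp: exponential_density_def)
  then show ?thesis by (simp add: lborel_integral_eq_trunc_mgf)
qed

lemma trunc_mgf_eq:
  assumes "0 \<le> M"
  shows "trunc_mgf c M = (if c = 1 then M else (exp ((c - 1) * M) - 1) / (c - 1))"
proof (cases "c = 1")
  case False
  have "((\<lambda>y. exp ((c - 1) * y)) has_integral (exp ((c - 1) * M) / (c - 1) - exp ((c - 1) * 0) / (c - 1))) {0..M}"
    using False assms
    by (intro fundamental_theorem_of_calculus)
       (auto intro!: derivative_eq_intros simp: has_real_derivative_iff_has_vector_derivative[symmetric])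
  then show ?thesis using False unfolding trunc_mgf_def by (simp add: integral_unique diff_divide_distrib)
qed (use assms in \<open>simp add: trunc_mgf_def\<close>)

lemma trunc_mgf_deriv_eq:
  assumes "0 \<le> M" "c \<noteq> 1"
  shows "trunc_mgf_deriv c M = (M / (c - 1) - 1 / (c - 1)\<^sup>2) * exp ((c - 1) * M) + 1 / (c - 1)\<^sup>2"
proof -
  let ?F = "\<lambda>y. (y / (c - 1) - 1 / (c - 1)\<^sup>2) * exp ((c - 1) * y)"
  have "(?F has_real_derivative y * exp ((c - 1) * y)) (at y)" for y
  proof -
    have "(?F has_real_derivative 1 / (c - 1) * exp ((c - 1) * y)
        + (y / (c - 1) - 1 / (c - 1)\<^sup>2) * (exp ((c - 1) * y) * (c - 1))) (at y)"
      using assms(2) by (auto intro!: derivative_eq_intros)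
    moreover have "1 / d * E + (y / d - 1 / d\<^sup>2) * (E * d) = y * E" if "d \<noteq> 0" for d E :: real
      using that by (simp add: field_simps power2_eq_square)
    ultimately show ?thesis using assms(2) by simp
  qed
  then have "((\<lambda>y. y * exp ((c - 1) * y)) has_integral (?F M - ?F 0)) {0..M}"
    using assms(1) by (intro fundamental_theorem_of_calculus)
      (auto simp: has_real_derivative_iff_has_vector_derivative[symmetric] intro: has_field_derivative_at_within)
  then show ?thesis unfolding trunc_mgf_deriv_def by (simp add: integral_unique)
qed

lemma trunc_mgf_pos: "0 < M \<Longrightarrow> 0 < trunc_mgf c M"
  by (cases c "1::real" rule: linorder_cases)
     (auto simp: trunc_mgf_eq divide_neg_neg mult_neg_pos)

lemma trunc_mgf_mono:
  assumes "0 \<le> M" "M \<le> M'" shows "trunc_mgf c M \<le> trunc_mgf c M'"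
proof -
  have "exp ((c - 1) * M) \<le> exp ((c - 1) * M')" if "1 < c"
    using that assms by simp
  moreover have "exp ((c - 1) * M') \<le> exp ((c - 1) * M)" if "c < 1"
    using that assms by (simp add: mult_left_mono_neg)
  ultimately show ?thesis using assms
    by (cases c "1::real" rule: linorder_cases)
       (auto simp: trunc_mgf_eq divide_right_mono divide_right_mono_neg)
qed

lemma trunc_mgf_le_exp_mult:
  assumes "0 \<le> M" shows "trunc_mgf c2 M \<le> exp (\<bar>c2 - c1\<bar> * M) * trunc_mgf c1 M"
proof -
  have "exp ((c2 - 1) * y) \<le> exp (\<bar>c2 - c1\<bar> * M) * exp ((c1 - 1) * y)" if "y \<in> {0..M}" for y
  proof -
    have "(c2 - c1) * y \<le> \<bar>c2 - c1\<bar> * M"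
      using that by (intro order.trans[OF mult_right_mono mult_left_mono]) auto
    then show ?thesis by (simp add: mult_exp_exp algebra_simps)
  qed
  then have "trunc_mgf c2 M \<le> integral {0..M} (\<lambda>y. exp (\<bar>c2 - c1\<bar> * M) * exp ((c1 - 1) * y))"
    unfolding trunc_mgf_def by (intro integral_le integrable_continuous_interval continuous_intros)
  then show ?thesis unfolding trunc_mgf_def by simp
qed

lemma ln_trunc_mgf_lipschitz:
  assumes "0 < M" shows "\<bar>ln (trunc_mgf c1 M) - ln (trunc_mgf c2 M)\<bar> \<le> M * \<bar>c1 - c2\<bar>"
proof -
  have *: "ln (trunc_mgf c2 M) \<le> \<bar>c2 - c1\<bar> * M + ln (trunc_mgf c1 M)" for c1 c2
  proof -
    have "ln (trunc_mgf c2 M) \<le> ln (exp (\<bar>c2 - c1\<bar> * M) * trunc_mgf c1 M)"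
      using assms trunc_mgf_le_exp_mult[of M c2 c1] trunc_mgf_pos[OF assms]
      by (subst ln_le_cancel_iff) auto
    also have "\<dots> = \<bar>c2 - c1\<bar> * M + ln (trunc_mgf c1 M)"
      using trunc_mgf_pos[OF assms, of c1] by (subst ln_mult) auto
    finally show ?thesis .
  qed
  from *[of c1 c2] *[of c2 c1] show ?thesis by (simp add: abs_minus_commute algebra_simps abs_le_iff)
qed

lemma trunc_mgf_tendsto: "c < 1 \<Longrightarrow> ((\<lambda>M. trunc_mgf c M) \<longlongrightarrow> 1 / (1 - c)) at_top"
proof -
  assume c: "c < 1"
  have "((\<lambda>M::real. (exp ((c - 1) * M) - 1) / (c - 1)) \<longlongrightarrow> - inverse (c - 1)) at_top"
    using c by real_asymp
  moreover have "- inverse (c - 1) = 1 / (1 - c)" using c by (simp add: field_simps)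
  ultimately have "((\<lambda>M::real. (exp ((c - 1) * M) - 1) / (c - 1)) \<longlongrightarrow> 1 / (1 - c)) at_top"
    by simp
  moreover have "eventually (\<lambda>M. (exp ((c - 1) * M) - 1) / (c - 1) = trunc_mgf c M) at_top"
    using eventually_ge_at_top[of 0] by eventually_elim (use c in \<open>simp add: trunc_mgf_eq\<close>)
  ultimately show ?thesis by (rule Lim_transform_eventually)
qed

lemma filterlim_trunc_mgf_at_top: "1 \<le> c \<Longrightarrow> filterlim (\<lambda>M. trunc_mgf c M) at_top at_top"
proof -
  assume c: "1 \<le> c"
  have "filterlim (\<lambda>M::real. if c = 1 then M else (exp ((c - 1) * M) - 1) / (c - 1)) at_top at_top"
    using c by (cases "c = 1") (simp_all add: filterlim_ident, real_asymp)
  moreover have "eventually (\<lambda>M. (if c = 1 then M else (exp ((c - 1) * M) - 1) / (c - 1)) = trunc_mgf c M) at_top"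
    using eventually_ge_at_top[of 0] by eventually_elim (simp add: trunc_mgf_eq)
  ultimately show ?thesis by (rule filterlim_cong[OF refl refl, THEN iffD1, rotated])
qed

lemma has_real_derivative_trunc_mgf: "((\<lambda>c. trunc_mgf c M) has_real_derivative trunc_mgf_deriv c M) (at c)"
proof -
  have "((\<lambda>c. integral (cbox 0 M) (\<lambda>y. exp ((c - 1) * y))) has_field_derivative
      integral (cbox 0 M) (\<lambda>y. y * exp ((c - 1) * y))) (at c within UNIV)"
    by (rule leibniz_rule_field_derivative)
       (auto intro!: derivative_eq_intros integrable_continuous_interval continuous_intros simp: split_beta)
  then show ?thesis unfolding trunc_mgf_def trunc_mgf_deriv_def by simp
qed

lemma continuous_on_trunc_mgf: "continuous_on UNIV (\<lambda>c. trunc_mgf c M)"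
  using has_real_derivative_trunc_mgf
  by (intro continuous_at_imp_continuous_on ballI DERIV_isCont) blast

lemma continuous_on_trunc_mgf_deriv: "continuous_on UNIV (\<lambda>c. trunc_mgf_deriv c M)"
proof -
  have "((\<lambda>c. integral (cbox 0 M) (\<lambda>y. y * exp ((c - 1) * y))) has_field_derivative
      integral (cbox 0 M) (\<lambda>y. y * (y * exp ((c - 1) * y)))) (at c within UNIV)" for c
    by (rule leibniz_rule_field_derivative)
       (auto intro!: derivative_eq_intros integrable_continuous_interval continuous_intros simp: split_beta)
  then show ?thesis unfolding trunc_mgf_deriv_def
    by (intro continuous_at_imp_continuous_on ballI DERIV_isCont) auto
qed

lemma has_real_derivative_ln_trunc_mgf:
  "0 < M \<Longrightarrow> ((\<lambda>c. ln (trunc_mgf c M)) has_real_derivative tilted_mean c M) (at c)"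
  using DERIV_chain2[OF DERIV_ln has_real_derivative_trunc_mgf, OF trunc_mgf_pos]
  by (simp add: tilted_mean_def field_simps)

lemma tilted_mean_bounds:
  assumes "0 < M" shows "0 \<le> tilted_mean c M" "tilted_mean c M \<le> M"
proof -
  have "0 \<le> trunc_mgf_deriv c M" unfolding trunc_mgf_deriv_def
    by (rule integral_nonneg) (auto intro!: integrable_continuous_interval continuous_intros)
  moreover have "trunc_mgf_deriv c M \<le> integral {0..M} (\<lambda>y. M * exp ((c - 1) * y))"
    unfolding trunc_mgf_deriv_def
    by (rule integral_le) (auto intro!: integrable_continuous_interval continuous_intros mult_right_mono)
  ultimately show "0 \<le> tilted_mean c M" "tilted_mean c M \<le> M"
    using trunc_mgf_pos[OF assms, of c] by (simp_all add: tilted_mean_def trunc_mgf_def field_simps)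
qed

lemma continuous_on_tilted_mean: "0 < M \<Longrightarrow> continuous_on UNIV (\<lambda>c. tilted_mean c M)"
  unfolding tilted_mean_def using trunc_mgf_pos[of M]
  by (intro continuous_on_divide continuous_on_trunc_mgf_deriv continuous_on_trunc_mgf)
     (auto simp: less_imp_neq[symmetric])

lemma tilted_mean_eq:
  assumes "0 < M" "c \<noteq> 1"
  shows "tilted_mean c M = ((M * (c - 1) - 1) * exp ((c - 1) * M) + 1) / ((c - 1) * (exp ((c - 1) * M) - 1))"
proof -
  have "((M / d - 1 / d\<^sup>2) * E + 1 / d\<^sup>2) / ((E - 1) / d) = ((M * d - 1) * E + 1) / (d * (E - 1))"
    if "d \<noteq> 0" "E - 1 \<noteq> 0" for d E :: real
    using that by (simp add: field_simps power2_eq_square)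
  then show ?thesis using assms
    by (simp add: tilted_mean_def trunc_mgf_deriv_eq trunc_mgf_eq)
qed

lemma tilted_mean_tendsto_at_top: "0 < M \<Longrightarrow> ((\<lambda>c. tilted_mean c M) \<longlongrightarrow> M) at_top"
proof -
  assume M: "0 < M"
  have "((\<lambda>c::real. ((M * (c - 1) - 1) * exp ((c - 1) * M) + 1) / ((c - 1) * (exp ((c - 1) * M) - 1))) \<longlongrightarrow> M) at_top"
    using M by real_asymp
  moreover have "eventually (\<lambda>c. ((M * (c - 1) - 1) * exp ((c - 1) * M) + 1) / ((c - 1) * (exp ((c - 1) * M) - 1))
      = tilted_mean c M) at_top"
    using eventually_ge_at_top[of 2] by eventually_elim (use M in \<open>simp add: tilted_mean_eq\<close>)
  ultimately show ?thesis by (rule Lim_transform_eventually)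
qed

lemma tilted_mean_tendsto_at_bot: "0 < M \<Longrightarrow> ((\<lambda>c. tilted_mean c M) \<longlongrightarrow> 0) at_bot"
proof -
  assume M: "0 < M"
  have "((\<lambda>c::real. ((M * (c - 1) - 1) * exp ((c - 1) * M) + 1) / ((c - 1) * (exp ((c - 1) * M) - 1))) \<longlongrightarrow> 0) at_bot"
    using M by real_asymp
  moreover have "eventually (\<lambda>c. ((M * (c - 1) - 1) * exp ((c - 1) * M) + 1) / ((c - 1) * (exp ((c - 1) * M) - 1))
      = tilted_mean c M) at_bot"
    using eventually_le_at_bot[of 0] by eventually_elim (use M in \<open>simp add: tilted_mean_eq\<close>)
  ultimately show ?thesis by (rule Lim_transform_eventually)
qed

lemma tilted_mean_0_tendsto: "((\<lambda>M. tilted_mean 0 M) \<longlongrightarrow> 1) at_top"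
proof -
  have "((\<lambda>M::real. ((M * (0 - 1) - 1) * exp ((0 - 1) * M) + 1) / ((0 - 1) * (exp ((0 - 1) * M) - 1))) \<longlongrightarrow> 1) at_top"
    by real_asymp
  moreover have "eventually (\<lambda>M. ((M * (0 - 1) - 1) * exp ((0 - 1) * M) + 1) / ((0 - 1) * (exp ((0 - 1) * M) - 1))
      = tilted_mean 0 M) at_top"
    using eventually_gt_at_top[of 0] by eventually_elim (simp add: tilted_mean_eq)
  ultimately show ?thesis by (rule Lim_transform_eventually)
qed

lemma exp_convex_comb_le:
  fixes p q A B u :: real
  assumes "0 < u" "u < 1"
  shows "exp ((1 - u) * p + u * q) \<le> exp ((1 - u) * A + u * B) * ((1 - u) * exp (p - A) + u * exp (q - B))"
    and "p - A \<noteq> q - B \<Longrightarrow>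
      exp ((1 - u) * p + u * q) < exp ((1 - u) * A + u * B) * ((1 - u) * exp (p - A) + u * exp (q - B))"
proof -
  have split: "exp ((1 - u) * p + u * q) = exp ((1 - u) * A + u * B) * exp ((1 - u) * (p - A) + u * (q - B))"
    by (simp add: mult_exp_exp algebra_simps)
  show "exp ((1 - u) * p + u * q) \<le> exp ((1 - u) * A + u * B) * ((1 - u) * exp (p - A) + u * exp (q - B))"
    unfolding split using assms by (intro mult_left_mono strictly_convex_onD_le[OF strictly_convex_on_exp]) auto
  show "exp ((1 - u) * p + u * q) < exp ((1 - u) * A + u * B) * ((1 - u) * exp (p - A) + u * exp (q - B))"
    if "p - A \<noteq> q - B"
    unfolding split using assms that by (intro mult_strict_left_mono strictly_convex_onD[OF strictly_convex_on_exp]) auto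
qed

text \<open>Hoelder's inequality for the truncated exponential law, with equality only on a null set.\<close>
lemma strictly_convex_on_ln_trunc_mgf:
  assumes M: "0 < M" shows "strictly_convex_on UNIV (\<lambda>c. ln (trunc_mgf c M))"
  unfolding strictly_convex_on_def
proof (intro conjI convex_UNIV ballI allI impI)
  fix c1 c2 u :: real assume "c1 \<noteq> c2 \<and> 0 < u \<and> u < 1"
  then have u: "0 < u" "u < 1" and c12: "c1 \<noteq> c2" by auto
  define A where "A = ln (trunc_mgf c1 M)"
  define B where "B = ln (trunc_mgf c2 M)"
  define K where "K = exp ((1 - u) * A + u * B)"
  define cu where "cu = (1 - u) * c1 + u * c2"
  define y0 where "y0 = (A - B) / (c1 - c2)"
  have G: "exp A = trunc_mgf c1 M" "exp B = trunc_mgf c2 M"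
    unfolding A_def B_def using trunc_mgf_pos[OF M] by simp_all
  define f where "f y = indicator {0..M} y * exp ((cu - 1) * y)" for y :: real
  define g where "g y = K * ((1 - u) / exp A * (indicator {0..M} y * exp ((c1 - 1) * y))
      + u / exp B * (indicator {0..M} y * exp ((c2 - 1) * y)))" for y :: real
  have pointwise: "exp ((cu - 1) * y)
      = exp ((1 - u) * ((c1 - 1) * y) + u * ((c2 - 1) * y))" for y
    unfolding cu_def by (simp add: algebra_simps)
  have "f y \<le> g y" for y
    using exp_convex_comb_le(1)[OF u, where p="(c1 - 1) * y" and q="(c2 - 1) * y" and A=A and B=B]
    unfolding f_def g_def K_def pointwise by (simp add: exp_diff indicator_def)
  moreover have "f y < g y" if "max 0 (if y0 < M then y0 else 0) < y" "y < M" for y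
  proof -
    have "y \<noteq> y0" using that by (auto split: if_splits)
    then have "(c1 - c2) * y \<noteq> A - B" using c12 unfolding y0_def by (auto simp: field_simps)
    then have "(c1 - 1) * y - A \<noteq> (c2 - 1) * y - B" by (auto simp: algebra_simps)
    then show ?thesis
      using exp_convex_comb_le(2)[OF u, where p="(c1 - 1) * y" and q="(c2 - 1) * y" and A=A and B=B] that
      unfolding f_def g_def K_def pointwise by (simp add: exp_diff indicator_def)
  qed
  moreover have "integrable lborel g"
    unfolding g_def by (intro integrable_mult_right Bochner_Integration.integrable_add integrable_indicator_exp)
  ultimately have "integral\<^sup>L lborel f < integral\<^sup>L lborel g"
    using M unfolding f_def
    by (intro integral_strict_mono_lborel[where p="max 0 (if y0 < M then y0 else 0)" and q=M]
        integrable_indicator_exp) auto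
  also have "integral\<^sup>L lborel g = K"
    unfolding g_def using integrable_indicator_exp
    by (simp add: lborel_integral_eq_trunc_mgf G flip: G(1,2))
  finally have "trunc_mgf cu M < K" unfolding f_def by (simp add: lborel_integral_eq_trunc_mgf)
  then have "ln (trunc_mgf cu M) < ln K"
    using trunc_mgf_pos[OF M, of cu] by (simp add: K_def del: ln_exp)
  then show "ln (trunc_mgf ((1 - u) * c1 + u * c2) M) < (1 - u) * ln (trunc_mgf c1 M) + u * ln (trunc_mgf c2 M)"
    unfolding K_def cu_def A_def B_def by simp
qed

section \<open>The functions psi_M and psi_Y_M\<close>

lemma psiM_eq: "psiM \<beta> x M \<alpha> = mp_int \<beta> (\<lambda>l. ln (trunc_mgf (\<alpha> * (l - x)) M))"
  unfolding psiM_def by (simp add: EY_exp_eq_trunc_mgf)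

lemma continuous_on_ln_trunc_mgf_affine:
  assumes "0 < M" shows "continuous_on UNIV (\<lambda>l. ln (trunc_mgf (\<alpha> * (l - x)) M))"
  using trunc_mgf_pos[OF assms]
  by (intro continuous_on_ln continuous_on_compose2[OF continuous_on_trunc_mgf, of _ "\<lambda>l. \<alpha> * (l - x)"])
     (auto intro!: continuous_intros simp: less_imp_neq[symmetric])

lemma borel_measurable_ln_trunc_mgf_affine [measurable]:
  "0 < M \<Longrightarrow> (\<lambda>l. ln (trunc_mgf (\<alpha> * (l - x)) M)) \<in> borel_measurable borel"
  by (rule borel_measurable_continuous_onI[OF continuous_on_ln_trunc_mgf_affine])

lemma integrable_ln_trunc_mgf_affine:
  "0 < \<beta> \<Longrightarrow> 0 < M \<Longrightarrow> integrable lborel (\<lambda>l. mp_density \<beta> l * ln (trunc_mgf (\<alpha> * (l - x)) M))"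
  by (rule integrable_mp_density_mult_continuous[OF _ continuous_on_ln_trunc_mgf_affine])

lemma lipschitz_on_ln_EY_exp:
  assumes "0 < M"
  shows "(M * \<bar>\<alpha>\<bar>)-lipschitz_on K (\<lambda>l. ln (EY (\<lambda>y. exp (\<alpha> * (l - x) * y)) {y. \<bar>y\<bar> \<le> M}))"
proof (rule lipschitz_onI)
  fix l1 l2 :: real
  have "\<bar>ln (trunc_mgf (\<alpha> * (l1 - x)) M) - ln (trunc_mgf (\<alpha> * (l2 - x)) M)\<bar>
      \<le> M * \<bar>\<alpha> * (l1 - x) - \<alpha> * (l2 - x)\<bar>"
    by (rule ln_trunc_mgf_lipschitz[OF assms])
  also have "\<bar>\<alpha> * (l1 - x) - \<alpha> * (l2 - x)\<bar> = \<bar>\<alpha>\<bar> * \<bar>l1 - l2\<bar>"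
    by (simp add: right_diff_distrib[symmetric] abs_mult)
  finally show "dist (ln (EY (\<lambda>y. exp (\<alpha> * (l1 - x) * y)) {y. \<bar>y\<bar> \<le> M}))
      (ln (EY (\<lambda>y. exp (\<alpha> * (l2 - x) * y)) {y. \<bar>y\<bar> \<le> M})) \<le> M * \<bar>\<alpha>\<bar> * dist l1 l2"
    unfolding EY_exp_eq_trunc_mgf dist_real_def by (simp add: mult.assoc)
qed (use assms in simp)

lemma measure_Ydist_atMost: "0 \<le> M \<Longrightarrow> measure Ydist {..M} = trunc_mgf 0 M"
proof -
  assume M: "0 \<le> M"
  have "emeasure Ydist {..M} = (\<integral>\<^sup>+ y. ennreal (indicator {0..M} y * exp ((0 - 1) * y)) \<partial>lborel)"
    by (subst emeasure_density)
       (auto intro!: nn_integral_cong simp: exponential_density_def indicator_def)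
  also have "\<dots> = ennreal (trunc_mgf 0 M)"
    using lborel_integral_eq_trunc_mgf[of M 0]
    by (subst nn_integral_eq_integral[OF integrable_indicator_exp]) auto
  finally show ?thesis using trunc_mgf_pos[of M 0] M
    by (cases "M = 0") (auto simp: measure_def trunc_mgf_def)
qed

lemma integral_YMdist_exp:
  assumes "0 < M" shows "(\<integral>y. exp (c * y) \<partial>YMdist M) = trunc_mgf c M / trunc_mgf 0 M"
proof -
  have "(indicator {0..M} y * exp (- y) / measure Ydist {..M}) *\<^sub>R exp (c * y)
      = indicator {0..M} y * exp ((c - 1) * y) / trunc_mgf 0 M" for y :: real
    using assms by (simp add: measure_Ydist_atMost mult_exp_exp algebra_simps)
  then have "(\<integral>y. exp (c * y) \<partial>YMdist M) = (\<integral>y. indicator {0..M} y * exp ((c - 1) * y) / trunc_mgf 0 M \<partial>lborel)"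
    unfolding YMdist_def by (subst integral_density) auto
  then show ?thesis by (simp add: lborel_integral_eq_trunc_mgf)
qed

lemma psiYM_eq:
  assumes "0 < \<beta>" "0 < M"
  shows "psiYM \<beta> x M = (\<lambda>\<alpha>. psiM \<beta> x M \<alpha> - ln (trunc_mgf 0 M))"
proof
  fix \<alpha>
  have "ln (trunc_mgf c M / trunc_mgf 0 M) = ln (trunc_mgf c M) - ln (trunc_mgf 0 M)" for c
    using trunc_mgf_pos[OF assms(2), of c] trunc_mgf_pos[OF assms(2), of 0] by (simp add: ln_div)
  then have "psiYM \<beta> x M \<alpha> = mp_int \<beta> (\<lambda>l. ln (trunc_mgf (\<alpha> * (l - x)) M) - ln (trunc_mgf 0 M))"
    unfolding psiYM_def by (simp add: integral_YMdist_exp[OF assms(2)])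
  also have "\<dots> = psiM \<beta> x M \<alpha> - ln (trunc_mgf 0 M)"
    using assms by (simp add: psiM_eq mp_int_diff mp_int_const integrable_ln_trunc_mgf_affine
        integrable_mp_density integrable_mult_left)
  finally show "psiYM \<beta> x M \<alpha> = psiM \<beta> x M \<alpha> - ln (trunc_mgf 0 M)" .
qed

lemma psiM_mono: "0 < \<beta> \<Longrightarrow> 0 < M \<Longrightarrow> M \<le> M' \<Longrightarrow> psiM \<beta> x M \<alpha> \<le> psiM \<beta> x M' \<alpha>"
  unfolding psiM_eq using trunc_mgf_pos[of M] trunc_mgf_pos[of M'] trunc_mgf_mono[of M M']
  by (intro mp_int_mono integrable_ln_trunc_mgf_affine) auto

lemma strictly_convex_on_psiM:
  assumes "0 < \<beta>" "x < lam_plus \<beta>" "0 < M"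
  shows "strictly_convex_on UNIV (psiM \<beta> x M)"
proof -
  have lin: "((1 - u) * \<alpha>1 + u * \<alpha>2) * (l - x) = (1 - u) * (\<alpha>1 * (l - x)) + u * (\<alpha>2 * (l - x))"
    for u \<alpha>1 \<alpha>2 l :: real by (simp add: algebra_simps)
  note sc = strictly_convex_on_ln_trunc_mgf[OF assms(3)]
  have "strictly_convex_on UNIV (\<lambda>\<alpha>. mp_int \<beta> (\<lambda>l. ln (trunc_mgf (\<alpha> * (l - x)) M)))"
  proof (rule strictly_convex_on_mp_int[OF assms(1,2) convex_UNIV])
    show "integrable lborel (\<lambda>l. mp_density \<beta> l * ln (trunc_mgf (\<alpha> * (l - x)) M))" for \<alpha>
      by (rule integrable_ln_trunc_mgf_affine[OF assms(1,3)])
    show "ln (trunc_mgf (((1 - u) * \<alpha>1 + u * \<alpha>2) * (l - x)) M)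
        \<le> (1 - u) * ln (trunc_mgf (\<alpha>1 * (l - x)) M) + u * ln (trunc_mgf (\<alpha>2 * (l - x)) M)"
      if "0 < u" "u < 1" for \<alpha>1 \<alpha>2 u l
      unfolding lin using that by (intro strictly_convex_onD_le[OF sc]) auto
    show "ln (trunc_mgf (((1 - u) * \<alpha>1 + u * \<alpha>2) * (l - x)) M)
        < (1 - u) * ln (trunc_mgf (\<alpha>1 * (l - x)) M) + u * ln (trunc_mgf (\<alpha>2 * (l - x)) M)"
      if "\<alpha>1 \<noteq> \<alpha>2" "0 < u" "u < 1" "l \<noteq> x" for \<alpha>1 \<alpha>2 u l
      unfolding lin using that by (intro strictly_convex_onD[OF sc]) auto
  qed
  then show ?thesis by (simp add: psiM_eq[abs_def])
qed

lemma strictly_convex_on_psiYM: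
  assumes "0 < \<beta>" "x < lam_plus \<beta>" "0 < M"
  shows "strictly_convex_on UNIV (psiYM \<beta> x M)"
  using assms by (simp add: psiYM_eq strictly_convex_on_diff_const strictly_convex_on_psiM)

section \<open>The limit M to infinity\<close>

definition mp_pos_int :: "real \<Rightarrow> (real \<Rightarrow> ereal) \<Rightarrow> ennreal" where
  "mp_pos_int \<beta> g = (\<integral>\<^sup>+ l. ennreal (mp_density \<beta> l) * e2ennreal (max (g l) 0) \<partial>lborel)"

lemma mp_eint_eq:
  "mp_eint \<beta> g = ereal (mp_atom \<beta>) * g 0 + enn2ereal (mp_pos_int \<beta> g) - enn2ereal (mp_pos_int \<beta> (\<lambda>l. - g l))"
  unfolding mp_eint_def mp_pos_int_def ..

lemma e2ennreal_max_0: "e2ennreal (max x 0) = e2ennreal x"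
  by (cases "x \<le> 0") (auto simp: e2ennreal_neg max_def)

lemma ereal_mp_int_eq:
  assumes "integrable lborel (\<lambda>l. mp_density \<beta> l * f l)"
  shows "ereal (mp_int \<beta> f) = ereal (mp_atom \<beta>) * ereal (f 0)
    + enn2ereal (\<integral>\<^sup>+ l. ennreal (mp_density \<beta> l * f l) \<partial>lborel)
    - enn2ereal (\<integral>\<^sup>+ l. ennreal (- (mp_density \<beta> l * f l)) \<partial>lborel)"
proof -
  have fin: "enn2ereal X = ereal (enn2real X)" if "X \<noteq> \<infinity>" for X
    using that by (cases X rule: ennreal_cases) auto
  show ?thesis
    unfolding mp_int_def real_lebesgue_integral_def[OF assms]
    using fin[OF integrableD(2)[OF assms]] fin[OF integrableD(3)[OF assms]] by simp
qed

lemma mp_pos_int_tendsto: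
  assumes "0 < \<beta>" and [measurable]: "\<And>n. f n \<in> borel_measurable borel"
    and mono: "\<And>l. incseq (\<lambda>n. f n l)" and lim: "\<And>l. (\<lambda>n. ereal (f n l)) \<longlonglongrightarrow> h l"
  shows "(\<lambda>n. \<integral>\<^sup>+ l. ennreal (mp_density \<beta> l * f n l) \<partial>lborel) \<longlonglongrightarrow> mp_pos_int \<beta> h"
  unfolding mp_pos_int_def
proof (rule nn_integral_LIMSEQ)
  note dens = mp_density_nonneg[OF assms(1)]
  show "incseq (\<lambda>n l. ennreal (mp_density \<beta> l * f n l))"
    using dens incseqD[OF mono] by (intro monoI le_funI ennreal_leI mult_left_mono) auto
  fix l
  have "(\<lambda>n. ennreal (mp_density \<beta> l) * e2ennreal (ereal (f n l)))
      \<longlonglongrightarrow> ennreal (mp_density \<beta> l) * e2ennreal (h l)"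
    by (intro ennreal_tendsto_cmult tendsto_e2ennrealI lim) simp
  then show "(\<lambda>n. ennreal (mp_density \<beta> l * f n l)) \<longlonglongrightarrow> ennreal (mp_density \<beta> l) * e2ennreal (max (h l) 0)"
    using dens by (simp add: ennreal_mult' e2ennreal_ereal e2ennreal_max_0)
qed measurable

lemma mp_neg_int_tendsto:
  assumes "0 < \<beta>" and [measurable]: "\<And>n. f n \<in> borel_measurable borel" "h \<in> borel_measurable borel"
    and int: "integrable lborel (\<lambda>l. mp_density \<beta> l * f 0 l)"
    and mono: "\<And>l. incseq (\<lambda>n. f n l)" and lim: "\<And>l. (\<lambda>n. ereal (f n l)) \<longlonglongrightarrow> h l"
  shows "(\<lambda>n. \<integral>\<^sup>+ l. ennreal (- (mp_density \<beta> l * f n l)) \<partial>lborel) \<longlonglongrightarrow> mp_pos_int \<beta> (\<lambda>l. - h l)"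
    and "mp_pos_int \<beta> (\<lambda>l. - h l) \<noteq> \<infinity>"
proof -
  note dens = mp_density_nonneg[OF assms(1)]
  let ?w = "\<lambda>l. ennreal (- (mp_density \<beta> l * f 0 l))"
  have w: "integral\<^sup>N lborel ?w < \<infinity>"
    using integrableD(3)[OF int] by (simp add: less_top)
  have le_w: "ennreal (- (mp_density \<beta> l * f n l)) \<le> ?w l" for n l
    using incseqD[OF mono, of 0 n] dens by (intro ennreal_leI) (auto intro: mult_left_mono)
  show lim_neg: "(\<lambda>n. \<integral>\<^sup>+ l. ennreal (- (mp_density \<beta> l * f n l)) \<partial>lborel) \<longlonglongrightarrow> mp_pos_int \<beta> (\<lambda>l. - h l)"
    unfolding mp_pos_int_def
  proof (rule nn_integral_dominated_convergence[where w="?w"])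
    show "AE l in lborel. (\<lambda>n. ennreal (- (mp_density \<beta> l * f n l)))
        \<longlonglongrightarrow> ennreal (mp_density \<beta> l) * e2ennreal (max (- h l) 0)"
    proof (intro AE_I2)
      fix l
      have "(\<lambda>n. ennreal (mp_density \<beta> l) * e2ennreal (- ereal (f n l)))
          \<longlonglongrightarrow> ennreal (mp_density \<beta> l) * e2ennreal (- h l)"
        by (intro ennreal_tendsto_cmult tendsto_e2ennrealI tendsto_uminus_ereal lim) simp
      then show "(\<lambda>n. ennreal (- (mp_density \<beta> l * f n l)))
          \<longlonglongrightarrow> ennreal (mp_density \<beta> l) * e2ennreal (max (- h l) 0)"
        using ennreal_mult'[OF dens, of l "- f _ l"] by (simp add: e2ennreal_ereal e2ennreal_max_0)
    qed
  qed (use w le_w in auto)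
  have "mp_pos_int \<beta> (\<lambda>l. - h l) \<le> integral\<^sup>N lborel ?w"
    by (rule LIMSEQ_le_const2[OF lim_neg]) (auto intro: nn_integral_mono le_w)
  then show "mp_pos_int \<beta> (\<lambda>l. - h l) \<noteq> \<infinity>" using w by (auto simp: top_unique)
qed

lemma mp_int_tendsto_mp_eint:
  assumes "0 < \<beta>" and [measurable]: "\<And>n. f n \<in> borel_measurable borel" "h \<in> borel_measurable borel"
    and int: "\<And>n. integrable lborel (\<lambda>l. mp_density \<beta> l * f n l)"
    and mono: "\<And>l. incseq (\<lambda>n. f n l)" and lim: "\<And>l. (\<lambda>n. ereal (f n l)) \<longlonglongrightarrow> h l"
  shows "(\<lambda>n. ereal (mp_int \<beta> (f n))) \<longlonglongrightarrow> mp_eint \<beta> h"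
proof -
  note neg = mp_neg_int_tendsto[OF assms(1-3) int mono lim]
  have "ereal (f 0 0) \<le> h 0"
    using lim[of 0] incseqD[OF mono] by (intro LIMSEQ_le_const) (auto intro: always_eventually)
  then have "ereal (mp_atom \<beta>) * h 0 \<noteq> - \<infinity>"
    using mp_atom_nonneg[of \<beta>] by (cases "h 0") (auto simp: ereal_mult_infty)
  then show ?thesis
    unfolding ereal_mp_int_eq[OF int] mp_eint_eq using neg(2)
    by (intro tendsto_diff_ereal_general tendsto_add_ereal_general tendsto_cmult_ereal lim
        mp_pos_int_tendsto[OF assms(1,2) mono lim] neg(1)[unfolded tendsto_enn2ereal_iff[symmetric]]
        iffD2[OF tendsto_enn2ereal_iff])
       (auto simp: enn2ereal_nonneg)
qed

lemma uminus_mp_eint_uminus: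
  assumes "mp_pos_int \<beta> (\<lambda>l. - h l) \<noteq> \<infinity>" and "h 0 \<noteq> - \<infinity>"
  shows "- mp_eint \<beta> (\<lambda>l. - h l) = mp_eint \<beta> h"
  using assms mp_atom_nonneg[of \<beta>] enn2ereal_nonneg[of "mp_pos_int \<beta> h"]
    enn2ereal_nonneg[of "mp_pos_int \<beta> (\<lambda>l. - h l)"]
  unfolding mp_eint_eq ereal_uminus_uminus
  by (cases "h 0"; cases "enn2ereal (mp_pos_int \<beta> h)"; cases "enn2ereal (mp_pos_int \<beta> (\<lambda>l. - h l))")
     (auto simp: ereal_mult_infty split: if_splits)

lemma neglog_neq_MInf: "neglog u \<noteq> - \<infinity>"
  unfolding neglog_def by auto

lemma neglog_eq_PInf: "u \<le> 0 \<Longrightarrow> neglog u = \<infinity>"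
  unfolding neglog_def by auto

lemma ln_trunc_mgf_tendsto_neglog: "((\<lambda>M. ereal (ln (trunc_mgf c M))) \<longlongrightarrow> neglog (1 - c)) at_top"
proof (cases "c < 1")
  case True
  have "((\<lambda>M. ln (trunc_mgf c M)) \<longlongrightarrow> ln (1 / (1 - c))) at_top"
    using True by (intro tendsto_ln trunc_mgf_tendsto) simp_all
  then show ?thesis using True by (simp add: neglog_def ln_div)
next
  case False
  then have "filterlim (\<lambda>M. ln (trunc_mgf c M)) at_top at_top"
    by (intro filterlim_compose[OF ln_at_top filterlim_trunc_mgf_at_top]) simp
  then show ?thesis using False by (simp add: neglog_def tendsto_PInfty_eq_at_top)
qed

lemma tendsto_at_top_if_mono_sequentially:
  fixes g :: "real \<Rightarrow> 'a::linorder_topology"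
  assumes mono: "\<And>M M'. 0 < M \<Longrightarrow> M \<le> M' \<Longrightarrow> g M \<le> g M'"
    and lim: "(\<lambda>n. g (real (Suc n))) \<longlonglongrightarrow> L"
  shows "(g \<longlongrightarrow> L) at_top"
proof (rule order_tendstoI)
  fix a assume "a < L"
  then obtain N where N: "a < g (real (Suc N))"
    using order_tendstoD(1)[OF lim] by (auto simp: eventually_sequentially)
  show "eventually (\<lambda>M. a < g M) at_top"
    using eventually_ge_at_top[of "real (Suc N)"]
    by eventually_elim (use N mono[of "real (Suc N)"] in \<open>auto intro: less_le_trans\<close>)
next
  fix a assume "L < a"
  have le_L: "g (real (Suc n)) \<le> L" for n
    by (rule incseq_le[OF _ lim]) (intro monoI mono, auto)
  show "eventually (\<lambda>M. g M < a) at_top"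
    using eventually_ge_at_top[of 1]
  proof eventually_elim
    fix M :: real assume "1 \<le> M"
    then have "g M \<le> g (real (Suc (nat \<lceil>M\<rceil>)))" by (intro mono) linarith+
    also note le_L
    also note \<open>L < a\<close>
    finally show "g M < a" .
  qed
qed

lemma psiM_tendsto_mp_eint:
  assumes "0 < \<beta>"
  shows "((\<lambda>M. ereal (psiM \<beta> x M \<alpha>)) \<longlongrightarrow> mp_eint \<beta> (\<lambda>l. neglog (1 + \<alpha> * (x - l)))) at_top"
    and "mp_pos_int \<beta> (\<lambda>l. - neglog (1 + \<alpha> * (x - l))) \<noteq> \<infinity>"
proof -
  define f where "f n l = ln (trunc_mgf (\<alpha> * (l - x)) (real (Suc n)))" for n l
  have [measurable]: "f n \<in> borel_measurable borel" for n
    unfolding f_def by (intro borel_measurable_ln_trunc_mgf_affine) simp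
  have [measurable]: "(\<lambda>l. neglog (1 + \<alpha> * (x - l))) \<in> borel_measurable borel"
    unfolding neglog_def by measurable
  have int: "integrable lborel (\<lambda>l. mp_density \<beta> l * f n l)" for n
    unfolding f_def using assms by (intro integrable_ln_trunc_mgf_affine) simp_all
  have mono: "incseq (\<lambda>n. f n l)" for l
    unfolding f_def using trunc_mgf_pos trunc_mgf_mono
    by (intro monoI) (simp add: ln_le_cancel_iff)
  have "(\<lambda>n. ereal (f n l)) \<longlonglongrightarrow> neglog (1 + \<alpha> * (x - l))" for l
    using filterlim_compose[OF ln_trunc_mgf_tendsto_neglog[of "\<alpha> * (l - x)"] filterlim_real_sequentially]
    unfolding f_def by (intro LIMSEQ_Suc) (simp add: algebra_simps)
  note lim = this
  show "mp_pos_int \<beta> (\<lambda>l. - neglog (1 + \<alpha> * (x - l))) \<noteq> \<infinity>"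
    by (rule mp_neg_int_tendsto(2)[OF assms _ _ int mono lim]) measurable
  have "(\<lambda>n. ereal (psiM \<beta> x (real (Suc n)) \<alpha>)) \<longlonglongrightarrow> mp_eint \<beta> (\<lambda>l. neglog (1 + \<alpha> * (x - l)))"
    using mp_int_tendsto_mp_eint[OF assms _ _ int mono lim] by (simp add: psiM_eq f_def)
  then show "((\<lambda>M. ereal (psiM \<beta> x M \<alpha>)) \<longlongrightarrow> mp_eint \<beta> (\<lambda>l. neglog (1 + \<alpha> * (x - l)))) at_top"
    using psiM_mono[OF assms] by (intro tendsto_at_top_if_mono_sequentially) auto
qed

lemma psiM_tendsto_uminus_mp_eint:
  "0 < \<beta> \<Longrightarrow> ((\<lambda>M. ereal (psiM \<beta> x M \<alpha>)) \<longlongrightarrow> - mp_eint \<beta> (\<lambda>l. - neglog (1 + \<alpha> * (x - l)))) at_top"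
  using psiM_tendsto_mp_eint[where \<beta>=\<beta> and x=x and \<alpha>=\<alpha>]
  by (simp add: uminus_mp_eint_uminus neglog_neq_MInf)

lemma mp_eint_eq_PInf_atom:
  assumes "0 < mp_atom \<beta>" "h 0 = \<infinity>" "mp_pos_int \<beta> (\<lambda>l. - h l) \<noteq> \<infinity>"
  shows "mp_eint \<beta> h = \<infinity>"
  using assms enn2ereal_nonneg[of "mp_pos_int \<beta> h"]
  by (cases "enn2ereal (mp_pos_int \<beta> (\<lambda>l. - h l))") (auto simp: mp_eint_eq)

lemma mp_eint_eq_PInf_interval:
  assumes "0 < \<beta>" "lam_minus \<beta> \<le> p" "p < q" "q \<le> lam_plus \<beta>"
    and "\<And>l. p < l \<Longrightarrow> l < q \<Longrightarrow> h l = \<infinity>"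
    and "h 0 \<noteq> - \<infinity>" "mp_pos_int \<beta> (\<lambda>l. - h l) \<noteq> \<infinity>"
  shows "mp_eint \<beta> h = \<infinity>"
proof -
  have "\<infinity> * indicator {p<..<q} l \<le> ennreal (mp_density \<beta> l) * e2ennreal (max (h l) 0)" for l
  proof (cases "l \<in> {p<..<q}")
    case True
    then have "0 < mp_density \<beta> l" using assms(2,4) by (intro mp_density_pos[OF assms(1)]) auto
    then show ?thesis using True assms(5) by (simp add: ennreal_mult_top)
  qed simp
  then have "(\<integral>\<^sup>+ l. \<infinity> * indicator {p<..<q} l \<partial>lborel) \<le> mp_pos_int \<beta> h"
    unfolding mp_pos_int_def by (intro nn_integral_mono)
  moreover have "(\<integral>\<^sup>+ l. \<infinity> * indicator {p<..<q} l \<partial>lborel) = \<infinity>"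
    using assms(3) by (subst nn_integral_cmult_indicator) (auto simp: ennreal_top_mult)
  ultimately have "mp_pos_int \<beta> h = \<infinity>" by (simp add: top_unique)
  then show ?thesis
    using assms(6,7) mp_atom_nonneg[of \<beta>]
    by (cases "h 0"; cases "enn2ereal (mp_pos_int \<beta> (\<lambda>l. - h l))")
       (auto simp: mp_eint_eq ereal_mult_infty)
qed

lemma one_plus_mult_diff_pos:
  fixes a b x \<alpha> l :: real
  assumes "a < x" "x < b" and "\<alpha> \<in> {- 1 / (x - a) <..< 1 / (b - x)}" and "a \<le> l" "l \<le> b"
  shows "0 < 1 + \<alpha> * (x - l)"
proof (cases "0 \<le> \<alpha>")
  case True
  have "\<alpha> * (b - x) < 1" using assms by (simp add: field_simps)
  moreover have "\<alpha> * (l - x) \<le> \<alpha> * (b - x)" using True assms by (intro mult_left_mono) auto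
  ultimately show ?thesis by (simp add: algebra_simps)
next
  case False
  have "-1 < \<alpha> * (x - a)" using assms by (simp add: field_simps)
  moreover have "\<alpha> * (x - a) \<le> \<alpha> * (x - l)" using False assms by (intro mult_left_mono_neg) auto
  ultimately show ?thesis by simp
qed

lemma psiM_tendsto_PInf:
  assumes "0 < \<beta>" "lam_t_minus \<beta> < x" "x < lam_plus \<beta>"
    and \<alpha>: "\<alpha> \<notin> {- 1 / (x - lam_t_minus \<beta>) .. 1 / (lam_plus \<beta> - x)}"
  shows "((\<lambda>M. ereal (psiM \<beta> x M \<alpha>)) \<longlongrightarrow> \<infinity>) at_top"
proof -
  let ?h = "\<lambda>l. neglog (1 + \<alpha> * (x - l))"
  note fin = psiM_tendsto_mp_eint(2)[OF assms(1), where x=x and \<alpha>=\<alpha>]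
  have "- 1 / (x - lam_t_minus \<beta>) < 0" "0 < 1 / (lam_plus \<beta> - x)" using assms(2,3) by simp_all
  then have \<alpha>_cases: "1 / (lam_plus \<beta> - x) < \<alpha> \<or> \<alpha> < - 1 / (x - lam_t_minus \<beta>)"
    using \<alpha> by auto
  have "mp_eint \<beta> ?h = \<infinity>"
  proof (cases "0 < \<alpha>")
    case True
    then have "1 / (lam_plus \<beta> - x) < \<alpha>" using \<alpha>_cases \<open>- 1 / (x - lam_t_minus \<beta>) < 0\<close> by auto
    then have "1 < \<alpha> * (lam_plus \<beta> - x)" using assms(3) by (simp add: field_simps)
    then have "x + 1 / \<alpha> < lam_plus \<beta>" using True by (simp add: field_simps)
    moreover have "?h l = \<infinity>" if "x + 1 / \<alpha> < l" for l
      using that True by (intro neglog_eq_PInf) (simp add: field_simps)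
    ultimately show ?thesis
      using assms(1) lam_minus_less_lam_plus[OF assms(1)] fin neglog_neq_MInf
      by (intro mp_eint_eq_PInf_interval[where p="max (lam_minus \<beta>) (x + 1 / \<alpha>)" and q="lam_plus \<beta>"]) auto
  next
    case False
    then have "\<alpha> < - 1 / (x - lam_t_minus \<beta>)" using \<alpha>_cases \<open>0 < 1 / (lam_plus \<beta> - x)\<close> by auto
    then have \<alpha>0: "\<alpha> < 0" and "\<alpha> * (x - lam_t_minus \<beta>) < -1"
      using \<open>- 1 / (x - lam_t_minus \<beta>) < 0\<close> assms(2) by (linarith, simp add: field_simps)
    then have "lam_t_minus \<beta> < x + 1 / \<alpha>" by (simp add: field_simps)
    moreover have inf: "?h l = \<infinity>" if "l < x + 1 / \<alpha>" for l
      using that \<alpha>0 by (intro neglog_eq_PInf) (simp add: field_simps)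
    ultimately show ?thesis
    proof (cases "1 < \<beta>")
      case True
      then show ?thesis using inf[of 0] \<open>lam_t_minus \<beta> < x + 1 / \<alpha>\<close> fin assms(1)
        by (intro mp_eint_eq_PInf_atom) (auto simp: lam_t_minus_def mp_atom_pos_iff)
    next
      case False
      then show ?thesis
        using assms(1) \<open>lam_t_minus \<beta> < x + 1 / \<alpha>\<close> inf lam_minus_less_lam_plus[OF assms(1)] fin neglog_neq_MInf
        by (intro mp_eint_eq_PInf_interval[where p="lam_minus \<beta>" and q="min (lam_plus \<beta>) (x + 1 / \<alpha>)"])
           (auto simp: lam_t_minus_eq_lam_minus)
    qed
  qed
  then show ?thesis using psiM_tendsto_mp_eint(1)[OF assms(1), where x=x and \<alpha>=\<alpha>] by simp
qed

lemma mp_pos_int_ereal: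
  assumes "0 < \<beta>" and "k \<in> borel_measurable borel" "continuous_on {lam_minus \<beta>..lam_plus \<beta>} k"
    and "\<And>l. l \<in> {lam_minus \<beta>..lam_plus \<beta>} \<Longrightarrow> h l = ereal (k l)"
  shows "mp_pos_int \<beta> h = ennreal (\<integral>l. mp_density \<beta> l * max (k l) 0 \<partial>lborel)"
proof -
  note dens = mp_density_nonneg[OF assms(1)]
  have "ennreal (mp_density \<beta> l) * e2ennreal (max (h l) 0) = ennreal (mp_density \<beta> l * max (k l) 0)" for l
    using assms(4)[of l] dens[of l]
    by (cases "l \<in> {lam_minus \<beta>..lam_plus \<beta>}")
       (auto simp: e2ennreal_max_0 e2ennreal_ereal ennreal_mult' mp_density_eq_0)
  moreover have "integrable lborel (\<lambda>l. mp_density \<beta> l * max (k l) 0)"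
    using assms(1-3) by (intro integrable_mp_density_mult_continuous_on) (auto intro!: continuous_intros)
  ultimately show ?thesis
    unfolding mp_pos_int_def using dens by (simp add: nn_integral_eq_integral)
qed

lemma mp_eint_ereal:
  assumes "0 < \<beta>" and "k \<in> borel_measurable borel" "continuous_on {lam_minus \<beta>..lam_plus \<beta>} k"
    and "\<And>l. l \<in> mp_support \<beta> \<Longrightarrow> h l = ereal (k l)"
  shows "mp_eint \<beta> h = ereal (mp_int \<beta> k)"
proof -
  note dens = mp_density_nonneg[OF assms(1)]
  have int: "integrable lborel (\<lambda>l. mp_density \<beta> l * max (k l) 0)"
      "integrable lborel (\<lambda>l. mp_density \<beta> l * max (- k l) 0)"
    using assms(1-3) by (auto intro!: integrable_mp_density_mult_continuous_on continuous_intros)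
  have "(\<integral>l. mp_density \<beta> l * max (k l) 0 \<partial>lborel) - (\<integral>l. mp_density \<beta> l * max (- k l) 0 \<partial>lborel)
      = (\<integral>l. mp_density \<beta> l * max (k l) 0 - mp_density \<beta> l * max (- k l) 0 \<partial>lborel)"
    using int by simp
  also have "\<dots> = (\<integral>l. mp_density \<beta> l * k l \<partial>lborel)"
    by (rule Bochner_Integration.integral_cong[OF refl]) (simp add: max_def algebra_simps)
  finally have diff: "(\<integral>l. mp_density \<beta> l * max (k l) 0 \<partial>lborel) - (\<integral>l. mp_density \<beta> l * max (- k l) 0 \<partial>lborel)
      = (\<integral>l. mp_density \<beta> l * k l \<partial>lborel)" .
  moreover have "ereal (mp_atom \<beta>) * h 0 = ereal (mp_atom \<beta> * k 0)"
    using assms(4)[of 0] mp_atom_nonneg[of \<beta>]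
    by (cases "0 < mp_atom \<beta>") (auto simp: mp_support_def zero_ereal_def[symmetric])
  moreover have "mp_pos_int \<beta> h = ennreal (\<integral>l. mp_density \<beta> l * max (k l) 0 \<partial>lborel)"
      "mp_pos_int \<beta> (\<lambda>l. - h l) = ennreal (\<integral>l. mp_density \<beta> l * max (- k l) 0 \<partial>lborel)"
    using assms by (auto intro!: mp_pos_int_ereal continuous_intros simp: mp_support_def)
  moreover have "0 \<le> (\<integral>l. mp_density \<beta> l * max (k l) 0 \<partial>lborel)"
      "0 \<le> (\<integral>l. mp_density \<beta> l * max (- k l) 0 \<partial>lborel)"
    using dens by (auto intro!: integral_nonneg_AE)
  ultimately show ?thesis
    unfolding mp_eint_eq mp_int_def using diff[symmetric] by (simp add: enn2ereal_ennreal)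
qed

lemma psi_eq_mp_int:
  assumes "0 < \<beta>" "lam_t_minus \<beta> < x" "x < lam_plus \<beta>"
    and "\<alpha> \<in> {- 1 / (x - lam_t_minus \<beta>) <..< 1 / (lam_plus \<beta> - x)}"
  shows "psi \<beta> x \<alpha> = mp_int \<beta> (\<lambda>l. - ln (1 + \<alpha> * (x - l)))"
proof -
  have pos: "0 < 1 + \<alpha> * (x - l)" if "l \<in> mp_support \<beta>" for l
    using that mp_support_subset[OF assms(1)] assms by (intro one_plus_mult_diff_pos) auto
  then have "mp_eint \<beta> (\<lambda>l. neglog (1 + \<alpha> * (x - l))) = ereal (mp_int \<beta> (\<lambda>l. - ln (1 + \<alpha> * (x - l))))"
    using assms(1) by (intro mp_eint_ereal continuous_intros)
       (auto simp: neglog_def mp_support_def less_imp_neq[symmetric])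
  then have "((\<lambda>M. psiM \<beta> x M \<alpha>) \<longlongrightarrow> mp_int \<beta> (\<lambda>l. - ln (1 + \<alpha> * (x - l)))) at_top"
    using psiM_tendsto_mp_eint(1)[OF assms(1), where x=x and \<alpha>=\<alpha>] by simp
  then show ?thesis unfolding psi_def by (intro tendsto_Lim) simp_all
qed

lemma strictly_convex_on_psi:
  assumes "0 < \<beta>" "lam_t_minus \<beta> < x" "x < lam_plus \<beta>"
  shows "strictly_convex_on {- 1 / (x - lam_t_minus \<beta>) <..< 1 / (lam_plus \<beta> - x)} (psi \<beta> x)"
proof (rule strictly_convex_on_cong)
  let ?I = "{- 1 / (x - lam_t_minus \<beta>) <..< 1 / (lam_plus \<beta> - x)}"
  have pos: "0 < 1 + \<alpha> * (x - l)" if "\<alpha> \<in> ?I" "l \<in> mp_support \<beta>" for \<alpha> l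
    using that mp_support_subset[OF assms(1)] assms by (intro one_plus_mult_diff_pos) auto
  have lin: "1 + ((1 - u) * \<alpha>1 + u * \<alpha>2) * (x - l) = (1 - u) * (1 + \<alpha>1 * (x - l)) + u * (1 + \<alpha>2 * (x - l))"
    for u \<alpha>1 \<alpha>2 l :: real by (simp add: algebra_simps)
  note sc = strictly_convex_on_minus_ln
  show "strictly_convex_on ?I (\<lambda>\<alpha>. mp_int \<beta> (\<lambda>l. - ln (1 + \<alpha> * (x - l))))"
  proof (rule strictly_convex_on_mp_int[OF assms(1,3)])
    show "integrable lborel (\<lambda>l. mp_density \<beta> l * - ln (1 + \<alpha> * (x - l)))" if "\<alpha> \<in> ?I" for \<alpha>
      using pos[OF that] assms(1)
      by (intro integrable_mp_density_mult_continuous_on continuous_intros)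
         (auto simp: mp_support_def less_imp_neq[symmetric])
    show "- ln (1 + ((1 - u) * \<alpha>1 + u * \<alpha>2) * (x - l))
        \<le> (1 - u) * - ln (1 + \<alpha>1 * (x - l)) + u * - ln (1 + \<alpha>2 * (x - l))"
      if "\<alpha>1 \<in> ?I" "\<alpha>2 \<in> ?I" "0 < u" "u < 1" "l \<in> mp_support \<beta>" for \<alpha>1 \<alpha>2 u l
      unfolding lin using that pos by (intro strictly_convex_onD_le[OF sc]) auto
    show "- ln (1 + ((1 - u) * \<alpha>1 + u * \<alpha>2) * (x - l))
        < (1 - u) * - ln (1 + \<alpha>1 * (x - l)) + u * - ln (1 + \<alpha>2 * (x - l))"
      if "\<alpha>1 \<in> ?I" "\<alpha>2 \<in> ?I" "\<alpha>1 \<noteq> \<alpha>2" "0 < u" "u < 1"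
        "lam_minus \<beta> < l" "l < lam_plus \<beta>" "l \<noteq> x" for \<alpha>1 \<alpha>2 u l
      unfolding lin using that pos[of _ l] by (intro strictly_convex_onD[OF sc]) (auto simp: mp_support_def)
  qed simp
qed (use psi_eq_mp_int[OF assms] in simp)

section \<open>Derivatives\<close>

definition psiM_deriv :: "real \<Rightarrow> real \<Rightarrow> real \<Rightarrow> real \<Rightarrow> real" where
  "psiM_deriv \<beta> x M \<alpha> = mp_int \<beta> (\<lambda>l. (l - x) * tilted_mean (\<alpha> * (l - x)) M)"

lemma continuous_on_tilted_mean_affine:
  assumes "0 < M"
  shows "continuous_on UNIV (\<lambda>l. (l - x) * tilted_mean (\<alpha> * (l - x)) M)"
    and "continuous_on UNIV (\<lambda>\<alpha>. (l - x) * tilted_mean (\<alpha> * (l - x)) M)"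
  using continuous_on_tilted_mean[OF assms]
  by (auto intro!: continuous_intros continuous_on_compose2[of UNIV "\<lambda>c. tilted_mean c M"])

lemma borel_measurable_tilted_mean_affine [measurable]:
  "0 < M \<Longrightarrow> (\<lambda>l. (l - x) * tilted_mean (\<alpha> * (l - x)) M) \<in> borel_measurable borel"
  by (rule borel_measurable_continuous_onI[OF continuous_on_tilted_mean_affine(1)])

lemma tilted_mean_affine_bound:
  assumes "0 < M" and "l \<in> {lam_minus \<beta>..lam_plus \<beta>}"
  shows "\<bar>(l - x) * tilted_mean c M\<bar> \<le> (lam_plus \<beta> + \<bar>x\<bar>) * M"
proof -
  have "\<bar>l - x\<bar> \<le> lam_plus \<beta> + \<bar>x\<bar>" using assms(2) lam_minus_nonneg[of \<beta>] by auto
  then show ?thesis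
    using tilted_mean_bounds[OF assms(1), of c] by (simp add: abs_mult mult_mono)
qed

lemma has_real_derivative_psiM:
  assumes "0 < \<beta>" "0 < M"
  shows "(psiM \<beta> x M has_real_derivative psiM_deriv \<beta> x M \<alpha>) (at \<alpha>)"
proof -
  have "((\<lambda>\<alpha>. mp_int \<beta> (\<lambda>l. ln (trunc_mgf (\<alpha> * (l - x)) M))) has_real_derivative psiM_deriv \<beta> x M \<alpha>) (at \<alpha>)"
    unfolding psiM_deriv_def
  proof (rule has_real_derivative_mp_int[OF assms(1), where C = "M * (lam_plus \<beta> + \<bar>x\<bar>)"])
    show "((\<lambda>\<alpha>. ln (trunc_mgf (\<alpha> * (l - x)) M)) has_real_derivative (l - x) * tilted_mean (\<alpha> * (l - x)) M) (at \<alpha>)"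
      for \<alpha> l
    proof -
      have "((\<lambda>\<alpha>. \<alpha> * (l - x)) has_real_derivative l - x) (at \<alpha>)"
        by (auto intro!: derivative_eq_intros)
      from DERIV_chain2[OF has_real_derivative_ln_trunc_mgf[OF assms(2)] this] show ?thesis
        by (simp add: mult.commute)
    qed
    show "\<bar>ln (trunc_mgf (\<alpha>1 * (l - x)) M) - ln (trunc_mgf (\<alpha>2 * (l - x)) M)\<bar> \<le> M * (lam_plus \<beta> + \<bar>x\<bar>) * \<bar>\<alpha>1 - \<alpha>2\<bar>"
      if "l \<in> {lam_minus \<beta>..lam_plus \<beta>}" for \<alpha>1 \<alpha>2 l
    proof -
      have "\<bar>ln (trunc_mgf (\<alpha>1 * (l - x)) M) - ln (trunc_mgf (\<alpha>2 * (l - x)) M)\<bar> \<le> M * (\<bar>l - x\<bar> * \<bar>\<alpha>1 - \<alpha>2\<bar>)"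
        using ln_trunc_mgf_lipschitz[OF assms(2), of "\<alpha>1 * (l - x)" "\<alpha>2 * (l - x)"]
        by (simp add: left_diff_distrib[symmetric] abs_mult mult.commute)
      also have "\<dots> \<le> M * ((lam_plus \<beta> + \<bar>x\<bar>) * \<bar>\<alpha>1 - \<alpha>2\<bar>)"
        using that lam_minus_nonneg[of \<beta>] assms(2) by (intro mult_left_mono mult_right_mono) auto
      finally show ?thesis by (simp add: mult.assoc)
    qed
  qed (use assms in \<open>auto intro: integrable_ln_trunc_mgf_affine\<close>)
  then show ?thesis by (simp add: psiM_eq[abs_def])
qed

lemma has_real_derivative_psiYM:
  assumes "0 < \<beta>" "0 < M"
  shows "(psiYM \<beta> x M has_real_derivative psiM_deriv \<beta> x M \<alpha>) (at \<alpha>)"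
  using DERIV_diff[OF has_real_derivative_psiM[OF assms] DERIV_const] by (simp add: psiYM_eq[OF assms])

lemma has_real_derivative_psiM_psiYM:
  assumes "0 < \<beta>" "0 < M" "psiM_deriv \<beta> x M \<alpha> = t"
  shows "(psiM \<beta> x M has_real_derivative t) (at \<alpha>) \<and> (psiYM \<beta> x M has_real_derivative t) (at \<alpha>)"
  using assms has_real_derivative_psiM has_real_derivative_psiYM by blast

lemma continuous_on_psiM_deriv: "0 < \<beta> \<Longrightarrow> 0 < M \<Longrightarrow> continuous_on UNIV (psiM_deriv \<beta> x M)"
  unfolding psiM_deriv_def[abs_def]
  by (intro continuous_on_mp_int[where C = "(lam_plus \<beta> + \<bar>x\<bar>) * M"]
      continuous_on_tilted_mean_affine tilted_mean_affine_bound) auto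

lemma psiM_deriv_0: "0 < \<beta> \<Longrightarrow> psiM_deriv \<beta> x M 0 = tilted_mean 0 M * (lam_bar \<beta> - x)"
  unfolding psiM_deriv_def lam_bar_def
  by (simp add: mult.commute[of _ "tilted_mean 0 M"] mp_int_cmult mp_int_diff mp_int_const
      integrable_mp_density integrable_mp_density_mult_continuous continuous_on_id)

lemma tilted_mean_affine_tendsto:
  assumes "0 < M"
  shows "((\<lambda>s. (l - x) * tilted_mean (s * (l - x)) M) \<longlongrightarrow> M * max (l - x) 0) at_top"
proof (cases x l rule: linorder_cases)
  case less
  then have "filterlim (\<lambda>s. (l - x) * s) at_top at_top"
    by (intro filterlim_tendsto_pos_mult_at_top[OF tendsto_const] filterlim_ident) auto
  from filterlim_compose[OF tilted_mean_tendsto_at_top[OF assms]] this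
  have "((\<lambda>s. (l - x) * tilted_mean (s * (l - x)) M) \<longlongrightarrow> (l - x) * M) at_top"
    by (intro tendsto_mult tendsto_const) (simp add: mult.commute)
  then show ?thesis using less by (simp add: mult.commute)
next
  case greater
  then have "filterlim (\<lambda>s. (l - x) * s) at_bot at_top"
    by (intro filterlim_tendsto_neg_mult_at_bot[OF tendsto_const] filterlim_ident) auto
  from filterlim_compose[OF tilted_mean_tendsto_at_bot[OF assms]] this
  have "((\<lambda>s. (l - x) * tilted_mean (s * (l - x)) M) \<longlongrightarrow> (l - x) * 0) at_top"
    by (intro tendsto_mult tendsto_const) (simp add: mult.commute)
  then show ?thesis using greater by simp
qed simp

lemma psiM_deriv_tendsto_at_top:
  assumes "0 < \<beta>" "0 < M"
  shows "(psiM_deriv \<beta> x M \<longlongrightarrow> M * mp_int \<beta> (\<lambda>l. max (l - x) 0)) at_top"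
proof -
  have "(psiM_deriv \<beta> x M \<longlongrightarrow> mp_int \<beta> (\<lambda>l. M * max (l - x) 0)) at_top"
    unfolding psiM_deriv_def[abs_def] using assms
    by (intro tendsto_mp_int_at_top[where C = "(lam_plus \<beta> + \<bar>x\<bar>) * M"]
        tilted_mean_affine_tendsto tilted_mean_affine_bound) auto
  then show ?thesis by (simp add: mp_int_cmult)
qed

lemma psiM_deriv_tendsto_at_bot:
  assumes "0 < \<beta>" "0 < M"
  shows "((\<lambda>s. psiM_deriv \<beta> x M (- s)) \<longlongrightarrow> - (M * mp_int \<beta> (\<lambda>l. max (x - l) 0))) at_top"
proof -
  have "((\<lambda>s. (l - x) * tilted_mean (- s * (l - x)) M) \<longlongrightarrow> - (M * max (x - l) 0)) at_top" for l
    using tendsto_minus[OF tilted_mean_affine_tendsto[OF assms(2), of x l]] by (simp add: algebra_simps)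
  then have "((\<lambda>s. psiM_deriv \<beta> x M (- s)) \<longlongrightarrow> mp_int \<beta> (\<lambda>l. - (M * max (x - l) 0))) at_top"
    unfolding psiM_deriv_def using assms
    by (intro tendsto_mp_int_at_top[where C = "(lam_plus \<beta> + \<bar>x\<bar>) * M"] tilted_mean_affine_bound
        borel_measurable_tilted_mean_affine) auto
  then show ?thesis using mp_int_cmult[of \<beta> "- M" "\<lambda>l. max (x - l) 0"] by simp
qed

lemma mp_int_pos_part_pos:
  assumes "0 < \<beta>" "x < lam_plus \<beta>" shows "0 < mp_int \<beta> (\<lambda>l. max (l - x) 0)"
proof -
  have "mp_int \<beta> (\<lambda>_. 0) < mp_int \<beta> (\<lambda>l. max (l - x) 0)"
    using assms lam_minus_less_lam_plus[OF assms(1)]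
    by (intro mp_int_strict_mono[where p="max (lam_minus \<beta>) x" and q="lam_plus \<beta>"]
        integrable_mp_density_mult_continuous continuous_intros) auto
  then show ?thesis using assms(1) by (simp add: mp_int_const)
qed

lemma mp_int_neg_part_pos:
  assumes "0 < \<beta>" "lam_t_minus \<beta> < x" shows "0 < mp_int \<beta> (\<lambda>l. max (x - l) 0)"
proof (cases "1 < \<beta>")
  case True
  then have "0 < mp_atom \<beta> * max (x - 0) 0"
    using assms by (simp add: mp_atom_pos_iff lam_t_minus_def)
  moreover have "0 \<le> (\<integral>l. mp_density \<beta> l * max (x - l) 0 \<partial>lborel)"
    using mp_density_nonneg[OF assms(1)] by (intro integral_nonneg_AE) auto
  ultimately show ?thesis unfolding mp_int_def by simp
next
  case False
  then have "mp_int \<beta> (\<lambda>_. 0) < mp_int \<beta> (\<lambda>l. max (x - l) 0)"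
    using assms lam_minus_less_lam_plus[OF assms(1)]
    by (intro mp_int_strict_mono[where p="lam_minus \<beta>" and q="min x (lam_plus \<beta>)"]
        integrable_mp_density_mult_continuous continuous_intros) (auto simp: lam_t_minus_eq_lam_minus)
  then show ?thesis using assms(1) by (simp add: mp_int_const)
qed

lemma IVT_at_top:
  fixes f :: "real \<Rightarrow> real"
  assumes "continuous_on UNIV f" "f 0 < t" "eventually (\<lambda>s. t < f s) at_top"
  shows "\<exists>\<alpha>>0. f \<alpha> = t"
proof -
  obtain s where s: "0 \<le> s" "t < f s"
    using eventually_conj[OF assms(3) eventually_ge_at_top[of 0]]
    by (auto simp: eventually_at_top_linorder)
  moreover have "continuous_on {0..s} f" using continuous_on_subset[OF assms(1)] by simp
  ultimately obtain \<alpha> where "0 \<le> \<alpha>" "f \<alpha> = t"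
    using IVT'[of f 0 t s] assms(2) by auto
  moreover have "\<alpha> \<noteq> 0" using \<open>f \<alpha> = t\<close> assms(2) by auto
  ultimately show ?thesis by (intro exI[of _ \<alpha>]) simp
qed

lemma psiM_psiYM_deriv_attains_above:
  assumes "0 < \<beta>" "x < lam_plus \<beta>" "lam_bar \<beta> - x < t"
  shows "\<forall>\<^sub>F M in at_top. \<exists>\<alpha>>0.
    (psiM \<beta> x M has_real_derivative t) (at \<alpha>) \<and> (psiYM \<beta> x M has_real_derivative t) (at \<alpha>)"
proof -
  define K where "K = mp_int \<beta> (\<lambda>l. max (l - x) 0)"
  have K: "0 < K" unfolding K_def using assms(1,2) by (rule mp_int_pos_part_pos)
  have "((\<lambda>M. tilted_mean 0 M * (lam_bar \<beta> - x)) \<longlongrightarrow> 1 * (lam_bar \<beta> - x)) at_top"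
    by (intro tendsto_mult tilted_mean_0_tendsto tendsto_const)
  then have "\<forall>\<^sub>F M in at_top. tilted_mean 0 M * (lam_bar \<beta> - x) < t"
    using assms(3) by (intro order_tendstoD(2)) auto
  moreover have "\<forall>\<^sub>F M in at_top. max 0 (t / K) < M" by (rule eventually_gt_at_top)
  ultimately show ?thesis
  proof eventually_elim
    case (elim M)
    then have M: "0 < M" and "t < M * K" using K by (auto simp: field_simps)
    then have "\<forall>\<^sub>F s in at_top. t < psiM_deriv \<beta> x M s"
      using order_tendstoD(1)[OF psiM_deriv_tendsto_at_top[OF assms(1) M]] by (simp add: K_def)
    moreover have "psiM_deriv \<beta> x M 0 < t" using elim(1) by (simp add: psiM_deriv_0[OF assms(1)])
    ultimately obtain \<alpha> where "0 < \<alpha>" "psiM_deriv \<beta> x M \<alpha> = t"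
      using IVT_at_top continuous_on_psiM_deriv[OF assms(1) M] by blast
    then show ?case using has_real_derivative_psiM_psiYM[OF assms(1) M] by blast
  qed
qed

lemma psiM_psiYM_deriv_attains_below:
  assumes "0 < \<beta>" "lam_t_minus \<beta> < x" "t < lam_bar \<beta> - x"
  shows "\<forall>\<^sub>F M in at_top. \<exists>\<alpha><0.
    (psiM \<beta> x M has_real_derivative t) (at \<alpha>) \<and> (psiYM \<beta> x M has_real_derivative t) (at \<alpha>)"
proof -
  define K where "K = mp_int \<beta> (\<lambda>l. max (x - l) 0)"
  have K: "0 < K" unfolding K_def using assms(1,2) by (rule mp_int_neg_part_pos)
  have "((\<lambda>M. tilted_mean 0 M * (lam_bar \<beta> - x)) \<longlongrightarrow> 1 * (lam_bar \<beta> - x)) at_top"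
    by (intro tendsto_mult tilted_mean_0_tendsto tendsto_const)
  then have "\<forall>\<^sub>F M in at_top. t < tilted_mean 0 M * (lam_bar \<beta> - x)"
    using assms(3) by (intro order_tendstoD(1)) auto
  moreover have "\<forall>\<^sub>F M in at_top. max 0 (- t / K) < M" by (rule eventually_gt_at_top)
  ultimately show ?thesis
  proof eventually_elim
    case (elim M)
    then have M: "0 < M" and "- (M * K) < t" using K by (auto simp: field_simps)
    then have "\<forall>\<^sub>F s in at_top. - t < - psiM_deriv \<beta> x M (- s)"
      using order_tendstoD(2)[OF psiM_deriv_tendsto_at_bot[OF assms(1) M]] by (simp add: K_def)
    moreover have "- psiM_deriv \<beta> x M (- 0) < - t" using elim(1) by (simp add: psiM_deriv_0[OF assms(1)])
    moreover have "continuous_on UNIV (\<lambda>s. psiM_deriv \<beta> x M (- s))"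
      by (rule continuous_on_compose2[OF continuous_on_psiM_deriv[OF assms(1) M]]) (auto intro: continuous_intros)
    then have "continuous_on UNIV (\<lambda>s. - psiM_deriv \<beta> x M (- s))" by (rule continuous_on_minus)
    ultimately obtain \<alpha> where "0 < \<alpha>" "- psiM_deriv \<beta> x M (- \<alpha>) = - t"
      using IVT_at_top[of "\<lambda>s. - psiM_deriv \<beta> x M (- s)" "- t"] by auto
    then show ?case
      using has_real_derivative_psiM_psiYM[OF assms(1) M, where \<alpha>="- \<alpha>"] by (intro exI[of _ "- \<alpha>"]) auto
  qed
qed

theorem proposition2:
  fixes \<beta> x M :: real
  assumes "\<beta> > 0"
    and "lam_t_minus \<beta> < x" and "x < lam_plus \<beta>"
    and "M > 0"
  shows
    "(\<forall>\<alpha>::real. \<forall>K::real set. compact K \<longrightarrow>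
        (\<exists>L. L-lipschitz_on K
          (\<lambda>l. ln (EY (\<lambda>y. exp (\<alpha> * (l - x) * y)) {y. \<bar>y\<bar> \<le> M}))))
   \<and> (\<forall>\<alpha>::real.
        mono_on {0<..} (\<lambda>M'. psiM \<beta> x M' \<alpha>)
      \<and> (\<alpha> \<in> {- 1 / (x - lam_t_minus \<beta>) .. 1 / (lam_plus \<beta> - x)} \<longrightarrow>
           ((\<lambda>M'. ereal (psiM \<beta> x M' \<alpha>)) \<longlongrightarrow>
              - mp_eint \<beta> (\<lambda>l. - neglog (1 + \<alpha> * (x - l)))) at_top)
      \<and> (\<alpha> \<notin> {- 1 / (x - lam_t_minus \<beta>) .. 1 / (lam_plus \<beta> - x)} \<longrightarrow>
           ((\<lambda>M'. ereal (psiM \<beta> x M' \<alpha>)) \<longlongrightarrow> \<infinity>) at_top))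
   \<and> strictly_convex_on UNIV (psiM \<beta> x M)
   \<and> strictly_convex_on UNIV (psiYM \<beta> x M)
   \<and> strictly_convex_on {- 1 / (x - lam_t_minus \<beta>) <..< 1 / (lam_plus \<beta> - x)} (psi \<beta> x)
   \<and> (\<forall>t. t < lam_bar \<beta> - x \<longrightarrow>
        (\<forall>\<^sub>F M' in at_top. \<exists>\<alpha> < 0.
           (psiM \<beta> x M' has_real_derivative t) (at \<alpha>) \<and>
           (psiYM \<beta> x M' has_real_derivative t) (at \<alpha>)))
   \<and> (\<forall>t. t > lam_bar \<beta> - x \<longrightarrow>
        (\<forall>\<^sub>F M' in at_top. \<exists>\<alpha> > 0.
           (psiM \<beta> x M' has_real_derivative t) (at \<alpha>) \<and>
           (psiYM \<beta> x M' has_real_derivative t) (at \<alpha>)))"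
proof -
  have \<beta>: "0 < \<beta>" and x: "lam_t_minus \<beta> < x" "x < lam_plus \<beta>" and M: "0 < M"
    using assms by auto
  show ?thesis
    using lipschitz_on_ln_EY_exp[OF M] psiM_mono[OF \<beta>]
      psiM_tendsto_uminus_mp_eint[OF \<beta>] psiM_tendsto_PInf[OF \<beta> x]
      strictly_convex_on_psiM[OF \<beta> x(2) M] strictly_convex_on_psiYM[OF \<beta> x(2) M]
      strictly_convex_on_psi[OF \<beta> x]
      psiM_psiYM_deriv_attains_below[OF \<beta> x(1)] psiM_psiYM_deriv_attains_above[OF \<beta> x(2)]
    by (intro conjI allI impI mono_onI exI) auto
qed

end
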